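(* Consider $M$ units whose treatment effect values $\tau(u)\in[0,1]$ are uniformly distributed, i.e. the $M$ values are placed uniformly spaced in $[0,1]$ and randomly permuted among the units. Then: (1) for any budget $K\le M$, one can obtain a $(1-\epsilon,\delta)$-optimal allocation using $N=O\big(M\ln(2M/\delta)/\epsilon\big)$ samples from the population; (2) solving the $\mathsf{FullCATE}$ problem with accuracy $\epsilon$ (i.e. producing, for every unit $u$, an $(\epsilon,\delta)$-accurate estimate of $\tau(u)$) requires $\Omega(M/\epsilon^2)$ samples.
   Context: A population is partitioned into $M$ units $u\in\{1,\dots,M\}$; each unit has an unknown average treatment effect $\tau(u)\in[0,1]$, the values being pairwise distinct. A sample from unit $u$ is an i.i.d. draw from $\mathrm{Bernoulli}(\tau(u))$. An estimate $\hat\tau$ of $\tau$ is $(\epsilon,\delta)$-accurate if $|\hat\tau-\tau|\le\epsilon$ with probability at least $1-\delta$. For a budget $K\in\{1,\dots,M\}$, an allocation is a set $S$ of $K$ units, with value $V_S=\sum_{u\in S}\tau(u)$; the optimal allocation $\mathcal U^*$ consists of the $K$ units with the largest $\tau(u)$. A (possibly randomized) allocation $S$ is $(1-\epsilon,\delta)$-optimal if $V_S/V_{\mathcal U^*}\ge 1-\epsilon$ with probability at least $1-\delta$.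
   Formalization: Part (2) holds only for $1/M \le \epsilon \le \epsilon_0$, for some constant $\epsilon_0 > 0$, and $\delta \le 1/4$; the uniformly spaced values are the grid $0, 1/(M-1), ..., 1$. Apart from conventions, each condition added here is assumed in the paper as well or is needed for the statement above to hold. *)

theory Defs
  imports "HOL-Probability.Probability" "HOL-Combinatorics.Permutations"
begin

text \<open>A history of samples: list of (unit queried, Bernoulli outcome).\<close>
type_synonym hist = "(nat \<times> bool) list"

text \<open>Units outside {1..M} do not exist; sampling them yields Bernoulli(0).\<close>
definition tau_unif :: "nat \<Rightarrow> (nat \<Rightarrow> nat) \<Rightarrow> nat \<Rightarrow> real" where
  "tau_unif M \<sigma> u = (if u \<in> {1..M} then (real (\<sigma> u) - 1) / (real M - 1) else 0)"

fun run :: "(hist \<Rightarrow> nat pmf) \<Rightarrow> (nat \<Rightarrow> real) \<Rightarrow> nat \<Rightarrow> hist pmf" where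
  "run pol \<tau> 0 = return_pmf []"
| "run pol \<tau> (Suc n) =
     bind_pmf (run pol \<tau> n) (\<lambda>h. bind_pmf (pol h) (\<lambda>u.
       map_pmf (\<lambda>b. h @ [(u, b)]) (bernoulli_pmf (\<tau> u))))"

definition cate_experiment ::
  "nat \<Rightarrow> nat \<Rightarrow> (hist \<Rightarrow> nat pmf) \<Rightarrow> (hist \<Rightarrow> 'a pmf) \<Rightarrow> ((nat \<Rightarrow> nat) \<times> 'a) pmf" where
  "cate_experiment M N pol out =
     bind_pmf (pmf_of_set {\<sigma>. \<sigma> permutes {1..M}}) (\<lambda>\<sigma>.
       bind_pmf (run pol (tau_unif M \<sigma>) N) (\<lambda>h.
         map_pmf (\<lambda>r. (\<sigma>, r)) (out h)))"

definition opt_alloc :: "(nat \<Rightarrow> real) \<Rightarrow> nat \<Rightarrow> nat \<Rightarrow> nat set" where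
  "opt_alloc \<tau> M K = {u \<in> {1..M}. card {v \<in> {1..M}. \<tau> v > \<tau> u} < K}"

definition alloc_value :: "(nat \<Rightarrow> real) \<Rightarrow> nat set \<Rightarrow> real" where
  "alloc_value \<tau> S = (\<Sum>u\<in>S. \<tau> u)"

definition good_alloc :: "nat \<Rightarrow> nat \<Rightarrow> real \<Rightarrow> ((nat \<Rightarrow> nat) \<times> nat set) set" where
  "good_alloc M K \<epsilon> = {(\<sigma>, S). S \<subseteq> {1..M} \<and> card S = K \<and>
      alloc_value (tau_unif M \<sigma>) S / alloc_value (tau_unif M \<sigma>) (opt_alloc (tau_unif M \<sigma>) M K)
        \<ge> 1 - \<epsilon>}"

definition accurate_at :: "nat \<Rightarrow> nat \<Rightarrow> real \<Rightarrow> ((nat \<Rightarrow> nat) \<times> (nat \<Rightarrow> real)) set" where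
  "accurate_at M u \<epsilon> = {(\<sigma>, est). \<bar>est u - tau_unif M \<sigma> u\<bar> \<le> \<epsilon>}"

end

theory Submission
  imports Defs
begin

text \<open>
  Upper bound: sample the units in round robin, n = O(ln(M/\<delta>)/\<epsilon>) times each, and allocate to the
  K units with the fewest failures. Call a pair (v in the optimum, u outside it) critical if
  misordering it could cost more than \<epsilon>K/2. A Chernoff bound on the failure counts shows that each
  critical pair is misordered with probability at most \<delta>/M^2; if none is, the deficit of the
  chosen allocation is at most \<epsilon>K/2, whereas the optimum is worth at least K/2.

  Lower bound: exchanging the effects of the units of ranks a and a + k, at distance d = k/(M - 1) > 2\<epsilon>,
  changes the law of an adaptive run only through the samples of those two units. Via the likelihood
  ratio and the Bhattacharyya coefficient, the sum of the probabilities of estimating the first unit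
  accurately in the two worlds is at most 1 + t + d^2/t times the expected number of samples of the two
  units. Averaging over all permutations and all ranks a in the middle of the range, where accuracy
  must hold with probability 3/4, forces N = \<Omega>(M/\<epsilon>^2).
\<close>

abbreviation unit_perms :: "nat \<Rightarrow> (nat \<Rightarrow> nat) set" where
  "unit_perms M \<equiv> {\<sigma>. \<sigma> permutes {1..M}}"

lemma finite_unit_perms: "finite (unit_perms M)"
  by (rule finite_permutations) simp

lemma card_unit_perms: "card (unit_perms M) = fact M"
  using card_permutations[of "{1..M}" M] by simp

lemma tau_unif_eq: "w \<in> {1..M} \<Longrightarrow> tau_unif M \<sigma> w = (real (\<sigma> w) - 1) / (real M - 1)"
  by (simp add: tau_unif_def)

lemma tau_unif_range:
  assumes "\<sigma> permutes {1..M}"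
  shows "0 \<le> tau_unif M \<sigma> w \<and> tau_unif M \<sigma> w \<le> 1"
proof (cases "w \<in> {1..M}")
  case True
  then have "1 \<le> \<sigma> w" "\<sigma> w \<le> M" using permutes_in_seg[OF assms] by auto
  then show ?thesis using True by (cases "M = 1") (auto simp: tau_unif_def divide_simps)
qed (auto simp: tau_unif_def)

lemma tau_unif_less_iff:
  assumes "2 \<le> M" "u \<in> {1..M}" "v \<in> {1..M}"
  shows "tau_unif M \<sigma> u < tau_unif M \<sigma> v \<longleftrightarrow> \<sigma> u < \<sigma> v"
  using assms by (auto simp: tau_unif_def divide_simps)

lemma permutes_bij_betw_filter:
  assumes "\<sigma> permutes {1..M}"
  shows "bij_betw \<sigma> {v\<in>{1..M}. P (\<sigma> v)} {a\<in>{1..M}. P a}"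
proof (rule bij_betw_subset[OF permutes_imp_bij[OF assms]])
  have "{a\<in>{1..M}. P a} \<subseteq> \<sigma> ` {v\<in>{1..M}. P (\<sigma> v)}"
  proof
    fix a assume "a \<in> {a\<in>{1..M}. P a}"
    moreover have "\<sigma> (inv \<sigma> a) = a" "inv \<sigma> a \<in> {1..M} \<longleftrightarrow> a \<in> {1..M}"
      using permutes_inverses(1)[OF assms] permutes_in_image[OF permutes_inv[OF assms]] by auto
    ultimately show "a \<in> \<sigma> ` {v\<in>{1..M}. P (\<sigma> v)}" by (metis (mono_tags, lifting) image_eqI mem_Collect_eq)
  qed
  then show "\<sigma> ` {v\<in>{1..M}. P (\<sigma> v)} = {a\<in>{1..M}. P a}"
    using permutes_in_image[OF assms] by blast
qed auto

lemma nn_integral_measure_pmf_bounded: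
  fixes \<phi> :: "'a \<Rightarrow> real" and p :: "'a pmf"
  assumes "\<And>x. 0 \<le> \<phi> x" "\<And>x. \<phi> x \<le> C"
  shows "(\<integral>\<^sup>+x. ennreal (\<phi> x) \<partial>p) = ennreal (\<integral>x. \<phi> x \<partial>p)"
proof (rule nn_integral_eq_integral)
  show "integrable p \<phi>"
    by (rule measure_pmf.integrable_const_bound[where B=C]) (use assms in auto)
qed (use assms in auto)

lemma measure_bind_pmf:
  "measure_pmf.prob (bind_pmf p f) X = (\<integral>x. measure_pmf.prob (f x) X \<partial>p)"
proof -
  have "ennreal (measure_pmf.prob (bind_pmf p f) X) = (\<integral>\<^sup>+x. ennreal (measure_pmf.prob (f x) X) \<partial>p)"
    by (simp add: measure_pmf.emeasure_eq_measure[symmetric])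
  also have "\<dots> = ennreal (\<integral>x. measure_pmf.prob (f x) X \<partial>p)"
    by (rule nn_integral_measure_pmf_bounded[where C=1]) auto
  finally show ?thesis by (simp add: integral_nonneg_AE)
qed

lemma prob_cate_experiment:
  "measure_pmf.prob (cate_experiment M N pol out) X =
     (\<Sum>\<sigma>\<in>unit_perms M. \<integral>h. measure_pmf.prob (out h) (Pair \<sigma> -` X) \<partial>run pol (tau_unif M \<sigma>) N) / fact M"
proof -
  have "unit_perms M \<noteq> {}" using permutes_id by blast
  from integral_pmf_of_set[OF this finite_unit_perms] show ?thesis
    unfolding cate_experiment_def measure_bind_pmf card_unit_perms by simp
qed

section \<open>Upper bound: round-robin sampling\<close>

definition round_robin :: "nat \<Rightarrow> hist \<Rightarrow> nat pmf" where
  "round_robin M h = return_pmf (length h mod M + 1)"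

text \<open>Ranking by failures rather than successes makes the Chernoff exponent scale with the failure
  probability 1 - \<tau> of the top units; this is what yields the rate 1/\<epsilon> instead of 1/\<epsilon>^2.\<close>

definition failures :: "nat \<Rightarrow> hist \<Rightarrow> nat" where
  "failures w h = length (filter (\<lambda>x. x = (w, False)) h)"

definition fewest_failures :: "nat \<Rightarrow> nat \<Rightarrow> hist \<Rightarrow> nat set" where
  "fewest_failures M K h = set (take K (sort_key (\<lambda>w. failures w h) [1..<M+1]))"

lemma length_run: "h \<in> set_pmf (run pol \<tau> n) \<Longrightarrow> length h = n"
  by (induction n arbitrary: h) auto

lemma nn_integral_prod_list_round_robin:
  fixes \<phi> :: "nat \<times> bool \<Rightarrow> real"
  assumes nonneg: "\<And>x. 0 \<le> \<phi> x"
  shows "(\<integral>\<^sup>+h. ennreal (prod_list (map \<phi> h)) \<partial>run (round_robin M) \<tau> j)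
       = (\<Prod>i<j. \<integral>\<^sup>+b. ennreal (\<phi> (i mod M + 1, b)) \<partial>bernoulli_pmf (\<tau> (i mod M + 1)))"
proof (induction j)
  case (Suc j)
  define G where "G w = (\<integral>\<^sup>+b. ennreal (\<phi> (w, b)) \<partial>bernoulli_pmf (\<tau> w))" for w
  have prod_nonneg: "0 \<le> prod_list (map \<phi> h)" for h by (induction h) (auto simp: nonneg)
  have "(\<integral>\<^sup>+h. ennreal (prod_list (map \<phi> h)) \<partial>run (round_robin M) \<tau> (Suc j))
      = (\<integral>\<^sup>+h. ennreal (prod_list (map \<phi> h)) * G (length h mod M + 1) \<partial>run (round_robin M) \<tau> j)"
    by (simp add: round_robin_def G_def ennreal_mult'' prod_nonneg nonneg nn_integral_cmult)
  also have "\<dots> = (\<integral>\<^sup>+h. ennreal (prod_list (map \<phi> h)) * G (j mod M + 1) \<partial>run (round_robin M) \<tau> j)"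
    by (rule nn_integral_cong_AE) (auto simp: AE_measure_pmf_iff length_run)
  also have "\<dots> = (\<integral>\<^sup>+h. ennreal (prod_list (map \<phi> h)) \<partial>run (round_robin M) \<tau> j) * G (j mod M + 1)"
    by (rule nn_integral_multc) simp
  finally show ?case
    using Suc.IH unfolding G_def by simp
qed simp

lemma prod_mod_cycles:
  fixes G :: "nat \<Rightarrow> 'a::comm_monoid_mult"
  assumes "0 < M"
  shows "(\<Prod>i<n * M. G (i mod M + 1)) = (\<Prod>w\<in>{1..M}. G w) ^ n"
proof (induction n)
  case (Suc n)
  have split: "{..<Suc n * M} = {..<n * M} \<union> {n * M..<n * M + M}" by auto
  have "(\<Prod>i<Suc n * M. G (i mod M + 1))
      = (\<Prod>i<n * M. G (i mod M + 1)) * (\<Prod>i\<in>{n * M..<n * M + M}. G (i mod M + 1))"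
    unfolding split by (rule prod.union_disjoint) auto
  also have "(\<Prod>i\<in>{n * M..<n * M + M}. G (i mod M + 1)) = (\<Prod>i<M. G ((n * M + i) mod M + 1))"
    by (rule prod.reindex_bij_witness[where i="\<lambda>i. n * M + i" and j="\<lambda>i. i - n * M"]) auto
  also have "\<dots> = (\<Prod>i<M. G (i + 1))" by (rule prod.cong) auto
  also have "\<dots> = (\<Prod>w\<in>{1..M}. G w)"
    by (rule prod.reindex_bij_witness[where i="\<lambda>w. w - 1" and j="\<lambda>i. i + 1"]) auto
  finally show ?case using Suc.IH by (simp add: mult.commute)
qed simp

lemma bernoulli_mgf_product_le:
  fixes xu xv :: real
  assumes xu: "0 < xu" "xu \<le> 1" and xv: "0 \<le> xv" "xv < xu"
  defines "\<theta> \<equiv> (xu - xv) / (4 * xu)"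
  shows "(1 - xu + xu * exp (- \<theta>)) * (1 - xv + xv * exp \<theta>) \<le> exp (- ((xu - xv)\<^sup>2 / (8 * xu)))"
proof -
  have l0: "0 < \<theta>" and l1: "\<theta> \<le> 1" unfolding \<theta>_def using xu xv by (auto simp: divide_simps)
  have exp_le: "exp \<theta> - 1 \<le> \<theta> + \<theta>\<^sup>2" using exp_bound[of \<theta>] l0 l1 by simp
  have exp_minus_le: "exp (- \<theta>) \<le> 1 - \<theta> + \<theta>\<^sup>2"
  proof -
    have "exp (- \<theta>) \<le> 1 / (1 + \<theta>)"
      using exp_ge_add_one_self[of \<theta>] l0 by (simp add: exp_minus divide_simps)
    also have "1 / (1 + \<theta>) \<le> 1 - \<theta> + \<theta>\<^sup>2"
    proof -
      have "1 \<le> (1 - \<theta> + \<theta>\<^sup>2) * (1 + \<theta>)"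
        using l0 by (simp add: algebra_simps power2_eq_square power3_eq_cube)
      then show ?thesis using l0 by (simp add: divide_simps)
    qed
    finally show ?thesis .
  qed
  have u_le: "1 - xu + xu * exp (- \<theta>) \<le> exp (- xu * (1 - exp (- \<theta>)))"
    using exp_ge_add_one_self[of "- xu * (1 - exp (- \<theta>))"] by (simp add: algebra_simps)
  have v_le: "1 - xv + xv * exp \<theta> \<le> exp (xv * (exp \<theta> - 1))"
    using exp_ge_add_one_self[of "xv * (exp \<theta> - 1)"] by (simp add: algebra_simps)
  have u_nonneg: "0 \<le> 1 - xu + xu * exp (- \<theta>)" using xu by (simp add: add_nonneg_nonneg)
  have v_nonneg: "0 \<le> 1 - xv + xv * exp \<theta>"
  proof -
    have "xv \<le> xv * exp \<theta>" using xv l0 by (simp add: mult_le_cancel_left1)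
    then show ?thesis by simp
  qed
  have "(1 - xu + xu * exp (- \<theta>)) * (1 - xv + xv * exp \<theta>)
      \<le> exp (- xu * (1 - exp (- \<theta>))) * exp (xv * (exp \<theta> - 1))"
    by (rule mult_mono[OF u_le v_le]) (use u_nonneg v_nonneg in auto)
  also have "\<dots> = exp (xv * (exp \<theta> - 1) - xu * (1 - exp (- \<theta>)))" by (simp add: exp_add[symmetric])
  also have "\<dots> \<le> exp (- ((xu - xv)\<^sup>2 / (8 * xu)))"
  proof -
    have a: "xv * (exp \<theta> - 1) \<le> xv * (\<theta> + \<theta>\<^sup>2)" by (rule mult_left_mono[OF exp_le xv(1)])
    have b: "xu * (\<theta> - \<theta>\<^sup>2) \<le> xu * (1 - exp (- \<theta>))"
      by (rule mult_left_mono) (use exp_minus_le xu in auto)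
    have c: "xv * (\<theta> + \<theta>\<^sup>2) - xu * (\<theta> - \<theta>\<^sup>2) = - (xu - xv) * \<theta> + (xu + xv) * \<theta>\<^sup>2"
      by (simp add: algebra_simps)
    have d: "(xu + xv) * \<theta>\<^sup>2 \<le> 2 * xu * \<theta>\<^sup>2" using xv by (intro mult_right_mono) auto
    have e: "- (xu - xv) * \<theta> + 2 * xu * \<theta>\<^sup>2 = - ((xu - xv)\<^sup>2 / (8 * xu))"
      unfolding \<theta>_def using xu by (simp add: field_simps power2_eq_square)
    show ?thesis using a b c d e by simp
  qed
  finally show ?thesis .
qed

lemma nn_integral_round_robin_exp_failures:
  fixes \<tau> :: "nat \<Rightarrow> real" and \<theta> :: real
  assumes M: "0 < M" and uv: "u \<in> {1..M}" "v \<in> {1..M}" "u \<noteq> v"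
    and range: "\<And>w. 0 \<le> \<tau> w \<and> \<tau> w \<le> 1"
  shows "(\<integral>\<^sup>+h. ennreal (exp (\<theta> * (real (failures v h) - real (failures u h)))) \<partial>run (round_robin M) \<tau> (n * M))
       = ennreal (((\<tau> u + (1 - \<tau> u) * exp (- \<theta>)) * (\<tau> v + (1 - \<tau> v) * exp \<theta>)) ^ n)"
proof -
  define \<phi> where "\<phi> x = exp (\<theta> * (of_bool (x = (v, False)) - of_bool (x = (u, False))))" for x
  define G where "G w = (\<integral>\<^sup>+b. ennreal (\<phi> (w, b)) \<partial>bernoulli_pmf (\<tau> w))" for w
  have prod_list_\<phi>: "prod_list (map \<phi> h) = exp (\<theta> * (real (failures v h) - real (failures u h)))" for h
    by (induction h) (auto simp: \<phi>_def failures_def exp_add[symmetric] algebra_simps)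
  have nonneg: "0 \<le> \<tau> u + (1 - \<tau> u) * exp (- \<theta>)" "0 \<le> \<tau> v + (1 - \<tau> v) * exp \<theta>"
    using range[of u] range[of v] by auto
  have "G w = 1" if "w \<noteq> u" "w \<noteq> v" for w
    unfolding G_def \<phi>_def using that range[of w] by (simp add: ennreal_plus[symmetric] del: ennreal_plus)
  then have "(\<Prod>w\<in>{1..M}. G w) = (\<Prod>w\<in>{u, v}. G w)"
    by (intro prod.mono_neutral_right) (use uv in auto)
  also have "\<dots> = ennreal (\<tau> u + (1 - \<tau> u) * exp (- \<theta>)) * ennreal (\<tau> v + (1 - \<tau> v) * exp \<theta>)"
    unfolding G_def \<phi>_def using uv range[of u] range[of v]
    by (simp add: ennreal_plus[symmetric] ennreal_mult''[symmetric] algebra_simps del: ennreal_plus)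
  finally have prod_G: "(\<Prod>w\<in>{1..M}. G w) = ennreal ((\<tau> u + (1 - \<tau> u) * exp (- \<theta>)) * (\<tau> v + (1 - \<tau> v) * exp \<theta>))"
    using nonneg by (simp add: ennreal_mult)
  have "(\<integral>\<^sup>+h. ennreal (exp (\<theta> * (real (failures v h) - real (failures u h)))) \<partial>run (round_robin M) \<tau> (n * M))
      = (\<Prod>i<n * M. G (i mod M + 1))"
    unfolding prod_list_\<phi>[symmetric] G_def by (rule nn_integral_prod_list_round_robin) (simp add: \<phi>_def)
  also have "\<dots> = (\<Prod>w\<in>{1..M}. G w) ^ n" by (rule prod_mod_cycles[OF M])
  finally show ?thesis
    unfolding prod_G using nonneg by (simp add: ennreal_power)
qed

lemma round_robin_misorder_prob_le:
  fixes \<tau> :: "nat \<Rightarrow> real"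
  assumes M: "0 < M" and uv: "u \<in> {1..M}" "v \<in> {1..M}" "u \<noteq> v"
    and range: "\<And>w. 0 \<le> \<tau> w \<and> \<tau> w \<le> 1" and less: "\<tau> u < \<tau> v"
  shows "measure_pmf.prob (run (round_robin M) \<tau> (n * M)) {h. failures u h \<le> failures v h}
      \<le> exp (- (real n * (\<tau> v - \<tau> u)\<^sup>2 / (8 * (1 - \<tau> u))))"
proof -
  define xu where "xu = 1 - \<tau> u"
  define xv where "xv = 1 - \<tau> v"
  define \<theta> where "\<theta> = (xu - xv) / (4 * xu)"
  let ?P = "run (round_robin M) \<tau> (n * M)"
  have xu: "0 < xu" "xu \<le> 1" and xv: "0 \<le> xv" "xv < xu"
    using less range[of u] range[of v] unfolding xu_def xv_def by auto
  have "0 \<le> \<theta>" unfolding \<theta>_def using xu xv by simp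
  then have markov: "indicator {h. failures u h \<le> failures v h} h
      \<le> ennreal (exp (\<theta> * (real (failures v h) - real (failures u h))))" for h
    by (auto split: split_indicator)
  have "emeasure ?P {h. failures u h \<le> failures v h} = (\<integral>\<^sup>+h. indicator {h. failures u h \<le> failures v h} h \<partial>?P)"
    by simp
  also have "\<dots> \<le> (\<integral>\<^sup>+h. ennreal (exp (\<theta> * (real (failures v h) - real (failures u h)))) \<partial>?P)"
    by (rule nn_integral_mono) (rule markov)
  also have "\<dots> = ennreal (((1 - xu + xu * exp (- \<theta>)) * (1 - xv + xv * exp \<theta>)) ^ n)"
    unfolding nn_integral_round_robin_exp_failures[OF M uv range] xu_def xv_def by simp
  also have "\<dots> \<le> ennreal (exp (- ((xu - xv)\<^sup>2 / (8 * xu))) ^ n)"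
  proof (intro ennreal_leI power_mono)
    show "(1 - xu + xu * exp (- \<theta>)) * (1 - xv + xv * exp \<theta>) \<le> exp (- ((xu - xv)\<^sup>2 / (8 * xu)))"
      unfolding \<theta>_def by (rule bernoulli_mgf_product_le[OF xu xv])
    show "0 \<le> (1 - xu + xu * exp (- \<theta>)) * (1 - xv + xv * exp \<theta>)"
      using range[of u] range[of v] unfolding xu_def xv_def by simp
  qed
  also have "exp (- ((xu - xv)\<^sup>2 / (8 * xu))) ^ n = exp (- (real n * (\<tau> v - \<tau> u)\<^sup>2 / (8 * (1 - \<tau> u))))"
    unfolding xu_def xv_def by (simp add: exp_of_nat_mult[symmetric] power2_commute)
  finally show ?thesis by (simp add: measure_pmf.emeasure_eq_measure)
qed

lemma card_top_ranks:
  assumes "\<sigma> permutes {1..M}" "K \<le> M"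
  shows "card {u\<in>{1..M}. M - K < \<sigma> u} = K"
proof -
  have "card {u\<in>{1..M}. M - K < \<sigma> u} = card {a\<in>{1..M}. M - K < a}"
    by (rule bij_betw_same_card[OF permutes_bij_betw_filter[OF assms(1)]])
  also have "{a\<in>{1..M}. M - K < a} = {M - K + 1..M}" by auto
  finally show ?thesis using assms(2) by simp
qed

lemma opt_alloc_tau_unif:
  assumes \<sigma>: "\<sigma> permutes {1..M}" and M: "2 \<le> M"
  shows "opt_alloc (tau_unif M \<sigma>) M K = {u\<in>{1..M}. M - K < \<sigma> u}"
  unfolding opt_alloc_def
proof (rule Collect_cong, cases)
  fix u assume u: "u \<in> {1..M}"
  have "{v\<in>{1..M}. tau_unif M \<sigma> u < tau_unif M \<sigma> v} = {v\<in>{1..M}. \<sigma> u < \<sigma> v}"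
    using tau_unif_less_iff[OF M u] by auto
  then have "card {v\<in>{1..M}. tau_unif M \<sigma> u < tau_unif M \<sigma> v} = card {a\<in>{1..M}. \<sigma> u < a}"
    using bij_betw_same_card[OF permutes_bij_betw_filter[OF \<sigma>, of "\<lambda>a. \<sigma> u < a"]] by simp
  also have "{a\<in>{1..M}. \<sigma> u < a} = {\<sigma> u + 1..M}" by auto
  finally show "(u \<in> {1..M} \<and> card {v\<in>{1..M}. tau_unif M \<sigma> u < tau_unif M \<sigma> v} < K) = (u \<in> {1..M} \<and> M - K < \<sigma> u)"
    using u permutes_in_seg[OF \<sigma> u] by auto
qed auto

lemma alloc_value_top_ranks_ge:
  assumes \<sigma>: "\<sigma> permutes {1..M}" and M: "2 \<le> M" and K: "K \<le> M"
  shows "real K / 2 \<le> alloc_value (tau_unif M \<sigma>) {u\<in>{1..M}. M - K < \<sigma> u}"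
proof -
  define X where "X = {M - K + 1..M}"
  have "alloc_value (tau_unif M \<sigma>) {u\<in>{1..M}. M - K < \<sigma> u} = (\<Sum>u\<in>{u\<in>{1..M}. M - K < \<sigma> u}. (real (\<sigma> u) - 1) / (real M - 1))"
    unfolding alloc_value_def by (rule sum.cong) (auto simp: tau_unif_eq)
  also have "\<dots> = (\<Sum>a\<in>{a\<in>{1..M}. M - K < a}. (real a - 1) / (real M - 1))"
    by (rule sum.reindex_bij_betw[OF permutes_bij_betw_filter[OF \<sigma>]])
  also have "{a\<in>{1..M}. M - K < a} = X" unfolding X_def using M by auto
  finally have value_eq: "alloc_value (tau_unif M \<sigma>) {u\<in>{1..M}. M - K < \<sigma> u} = (\<Sum>a\<in>X. real a - 1) / (real M - 1)"
    by (simp add: sum_divide_distrib)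
  define r where "r a = 2 * M - K + 1 - a" for a
  have "(\<Sum>a\<in>X. real a - 1) = (\<Sum>a\<in>X. real (r a) - 1)"
    by (rule sum.reindex_bij_witness[where i=r and j=r]) (use K in \<open>auto simp: X_def r_def of_nat_diff\<close>)
  then have "2 * (\<Sum>a\<in>X. real a - 1) = (\<Sum>a\<in>X. real a - 1) + (\<Sum>a\<in>X. real (r a) - 1)"
    by simp
  also have "\<dots> = (\<Sum>a\<in>X. (real a - 1) + (real (r a) - 1))"
    by (rule sum.distrib[symmetric])
  also have "\<dots> = (\<Sum>a\<in>X. real (2 * M - K - 1))"
    by (rule sum.cong) (use K M in \<open>auto simp: X_def r_def of_nat_diff\<close>)
  also have "\<dots> = real K * real (2 * M - K - 1)" using K M unfolding X_def by (simp add: of_nat_diff)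
  also have "\<dots> \<ge> real K * (real M - 1)" using K M by (intro mult_left_mono) (auto simp: of_nat_diff)
  finally have "real K * (real M - 1) / 2 \<le> (\<Sum>a\<in>X. real a - 1)" by simp
  then show ?thesis using M unfolding value_eq by (simp add: divide_simps)
qed

lemma alloc_value_deficit:
  assumes \<sigma>: "\<sigma> permutes {1..M}" and M: "2 \<le> M" and K: "K \<le> M"
    and S: "S \<subseteq> {1..M}" "card S = K"
  defines "\<tau> \<equiv> tau_unif M \<sigma>" and "opt \<equiv> {u\<in>{1..M}. M - K < \<sigma> u}"
  obtains "S = opt"
  | r us vs where "us \<in> S" "\<sigma> us \<le> M - K" "vs \<in> {1..M} - S" "M - K < \<sigma> vs"
      "real r \<le> real K" "real r \<le> (real M - 1) * (\<tau> vs - \<tau> us)"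
      "alloc_value \<tau> opt - alloc_value \<tau> S \<le> real r * (\<tau> vs - \<tau> us)"
proof -
  define A where "A = S - opt"
  define B where "B = opt - S"
  have m: "0 < real M - 1" using M by simp
  have fin: "finite S" "finite opt" "finite A" "finite B"
    using S(1) finite_subset unfolding opt_def A_def B_def by auto
  have card_opt: "card opt = K" unfolding opt_def by (rule card_top_ranks[OF \<sigma> K])
  have card_AB: "card A = card B"
    using card_Int_Diff[OF fin(1), of opt] card_Int_Diff[OF fin(2), of S] S(2) card_opt
    unfolding A_def B_def by (simp add: Int_commute)
  have \<tau>_mono: "\<tau> a \<le> \<tau> b" if "a \<in> {1..M}" "b \<in> {1..M}" "\<sigma> a \<le> \<sigma> b" for a b
    using that m by (simp add: \<tau>_def tau_unif_eq divide_right_mono)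
  show thesis
  proof (cases "A = {}")
    case True
    then have "B = {}" using card_AB fin(4) by simp
    then show thesis using \<open>A = {}\<close> that(1) unfolding A_def B_def by blast
  next
    case False
    then have "B \<noteq> {}" using card_AB fin(3,4) by auto
    have "Min (\<sigma> ` A) \<in> \<sigma> ` A" "Max (\<sigma> ` B) \<in> \<sigma> ` B"
      using fin(3,4) \<open>A \<noteq> {}\<close> \<open>B \<noteq> {}\<close> by (intro Min_in Max_in; simp)+
    then obtain us vs where us: "us \<in> A" "\<sigma> us = Min (\<sigma> ` A)" and vs: "vs \<in> B" "\<sigma> vs = Max (\<sigma> ` B)"
      by auto
    have us_in: "us \<in> S" "us \<in> {1..M}" "\<sigma> us \<le> M - K"
      using us(1) S(1) unfolding A_def opt_def by auto
    have vs_in: "vs \<in> {1..M} - S" "M - K < \<sigma> vs"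
      using vs(1) unfolding B_def opt_def by auto
    define r where "r = card A"
    have "(\<Sum>b\<in>B. \<tau> b) \<le> (\<Sum>b\<in>B. \<tau> vs)"
      using vs fin(4) by (intro sum_mono \<tau>_mono) (auto simp: B_def opt_def)
    moreover have "(\<Sum>a\<in>A. \<tau> us) \<le> (\<Sum>a\<in>A. \<tau> a)"
      using us fin(3) S(1) by (intro sum_mono \<tau>_mono) (auto simp: A_def)
    moreover have "alloc_value \<tau> opt - alloc_value \<tau> S = (\<Sum>b\<in>B. \<tau> b) - (\<Sum>a\<in>A. \<tau> a)"
      using sum.Int_Diff[OF fin(1), of \<tau> opt] sum.Int_Diff[OF fin(2), of \<tau> S]
      unfolding alloc_value_def A_def B_def by (simp add: Int_commute)
    ultimately have deficit: "alloc_value \<tau> opt - alloc_value \<tau> S \<le> real r * (\<tau> vs - \<tau> us)"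
      unfolding r_def by (simp add: card_AB right_diff_distrib)
    have "card B \<le> card opt" unfolding B_def using fin(2) by (simp add: card_mono)
    then have r_K: "real r \<le> real K" unfolding r_def card_AB card_opt by simp
    have "\<sigma> us \<le> \<sigma> a" if "a \<in> A" for a using us(2) fin(3) that by simp
    then have "\<sigma> ` A \<subseteq> {\<sigma> us..M - K}"
      using S(1) unfolding A_def opt_def by force
    then have "card (\<sigma> ` A) \<le> card {\<sigma> us..M - K}" by (intro card_mono) auto
    moreover have "card (\<sigma> ` A) = card A"
      using card_image[OF inj_on_subset[OF permutes_inj[OF \<sigma>]]] by simp
    ultimately have "real r \<le> real (\<sigma> vs) - real (\<sigma> us)"
      unfolding r_def using vs_in(2) us_in(3) by simp
    also have "\<dots> = (real M - 1) * (\<tau> vs - \<tau> us)"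
      using us_in(2) vs_in(1) m by (simp add: \<tau>_def tau_unif_eq diff_divide_distrib[symmetric])
    finally show thesis using that(2)[OF us_in(1,3) vs_in r_K _ deficit] by blast
  qed
qed

definition critical_pair :: "nat \<Rightarrow> nat \<Rightarrow> real \<Rightarrow> (nat \<Rightarrow> nat) \<Rightarrow> nat \<Rightarrow> nat \<Rightarrow> bool" where
  "critical_pair M K \<epsilon> \<sigma> v u \<longleftrightarrow> v \<in> {1..M} \<and> u \<in> {1..M} \<and> M - K < \<sigma> v \<and> \<sigma> u \<le> M - K \<and>
     \<epsilon> / 2 < tau_unif M \<sigma> v - tau_unif M \<sigma> u \<and>
     \<epsilon> * real K / 2 < (real M - 1) * (tau_unif M \<sigma> v - tau_unif M \<sigma> u)\<^sup>2"

lemma good_alloc_if_critical_pairs_ordered: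
  fixes Z :: "nat \<Rightarrow> nat"
  assumes \<sigma>: "\<sigma> permutes {1..M}" and M: "2 \<le> M" and K: "1 \<le> K" "K \<le> M" and \<epsilon>: "0 < \<epsilon>"
    and S: "S \<subseteq> {1..M}" "card S = K"
    and sorted: "\<And>a b. a \<in> S \<Longrightarrow> b \<in> {1..M} - S \<Longrightarrow> Z a \<le> Z b"
    and ordered: "\<And>v u. critical_pair M K \<epsilon> \<sigma> v u \<Longrightarrow> Z v < Z u"
  shows "(\<sigma>, S) \<in> good_alloc M K \<epsilon>"
proof -
  define \<tau> where "\<tau> = tau_unif M \<sigma>"
  define opt where "opt = {u\<in>{1..M}. M - K < \<sigma> u}"
  have value_opt: "real K / 2 \<le> alloc_value \<tau> opt"
    unfolding \<tau>_def opt_def by (rule alloc_value_top_ranks_ge[OF \<sigma> M K(2)])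
  have "alloc_value \<tau> opt - alloc_value \<tau> S \<le> \<epsilon> * real K / 2"
  proof (cases rule: alloc_value_deficit[OF \<sigma> M K(2) S])
    case 1
    then show ?thesis using \<epsilon> unfolding opt_def by simp
  next
    case (2 r us vs)
    define \<Delta> where "\<Delta> = \<tau> vs - \<tau> us"
    have "0 < \<Delta>" using 2 S(1) tau_unif_less_iff[OF M, of us vs \<sigma>] unfolding \<Delta>_def \<tau>_def by auto
    have "\<not> critical_pair M K \<epsilon> \<sigma> vs us"
      using ordered sorted[OF 2(1,3)] by (meson leD)
    then have "\<Delta> \<le> \<epsilon> / 2 \<or> (real M - 1) * \<Delta>\<^sup>2 \<le> \<epsilon> * real K / 2"
      using 2 S(1) unfolding critical_pair_def \<Delta>_def \<tau>_def by auto
    moreover have "real r * \<Delta> \<le> real K * \<Delta>" "real r * \<Delta> \<le> (real M - 1) * \<Delta>\<^sup>2"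
      using 2 \<open>0 < \<Delta>\<close> unfolding \<Delta>_def \<tau>_def by (auto simp: power2_eq_square intro: mult_right_mono)
    moreover have "real K * \<Delta> \<le> \<epsilon> * real K / 2" if "\<Delta> \<le> \<epsilon> / 2"
      using mult_left_mono[OF that, of "real K"] by (simp add: mult.commute)
    ultimately show ?thesis using 2(7) unfolding \<Delta>_def opt_def \<tau>_def by linarith
  qed
  moreover have "\<epsilon> * real K / 2 \<le> \<epsilon> * alloc_value \<tau> opt" using value_opt \<epsilon> by simp
  ultimately have "(1 - \<epsilon>) * alloc_value \<tau> opt \<le> alloc_value \<tau> S" by (simp add: algebra_simps)
  moreover have "0 < alloc_value \<tau> opt" using value_opt K by linarith
  ultimately show ?thesis
    using S opt_alloc_tau_unif[OF \<sigma> M] unfolding good_alloc_def \<tau>_def opt_def by (simp add: divide_simps)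
qed

lemma fewest_failures_props:
  assumes "K \<le> M"
  shows "fewest_failures M K h \<subseteq> {1..M}" "card (fewest_failures M K h) = K"
    and "\<And>a b. a \<in> fewest_failures M K h \<Longrightarrow> b \<in> {1..M} - fewest_failures M K h \<Longrightarrow> failures a h \<le> failures b h"
proof -
  define f where "f w = failures w h" for w
  define xs where "xs = sort_key f [1..<M+1]"
  have set_xs: "set xs = {1..M}" unfolding xs_def by auto
  have "distinct xs" "length xs = M" unfolding xs_def by simp_all
  have S: "fewest_failures M K h = set (take K xs)" unfolding fewest_failures_def xs_def f_def ..
  show "fewest_failures M K h \<subseteq> {1..M}" unfolding S using set_take_subset[of K xs] set_xs by simp
  show "card (fewest_failures M K h) = K"
    unfolding S using distinct_card[OF distinct_take[OF \<open>distinct xs\<close>]] \<open>length xs = M\<close> assms by simp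
  have "sorted (map f (take K xs) @ map f (drop K xs))"
    using sorted_sort_key[of f "[1..<M+1]"] unfolding xs_def by (metis append_take_drop_id map_append)
  then have sorted: "f a \<le> f b" if "a \<in> set (take K xs)" "b \<in> set (drop K xs)" for a b
    using that unfolding sorted_append by auto
  fix a b assume a: "a \<in> fewest_failures M K h" and b: "b \<in> {1..M} - fewest_failures M K h"
  have "b \<in> set (take K xs @ drop K xs)" using b set_xs by simp
  then have "b \<in> set (drop K xs)" using b unfolding S set_append by blast
  then show "failures a h \<le> failures b h" using sorted a unfolding S f_def by blast
qed

lemma critical_pair_gap_ge:
  assumes cp: "critical_pair M K \<epsilon> \<sigma> v u" and \<sigma>: "\<sigma> permutes {1..M}" and M: "2 \<le> M" and K: "1 \<le> K"
  shows "\<epsilon> / 4 \<le> (tau_unif M \<sigma> v - tau_unif M \<sigma> u)\<^sup>2 / (1 - tau_unif M \<sigma> u)"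
proof -
  define m where "m = real M - 1"
  define \<Delta> where "\<Delta> = tau_unif M \<sigma> v - tau_unif M \<sigma> u"
  define xv where "xv = 1 - tau_unif M \<sigma> v"
  have m: "0 < m" using M unfolding m_def by simp
  have v: "v \<in> {1..M}" "M - K < \<sigma> v" and gap: "\<epsilon> / 2 < \<Delta>" "\<epsilon> * real K / 2 < m * \<Delta>\<^sup>2"
    using cp unfolding critical_pair_def \<Delta>_def m_def by auto
  have "xv = (real M - real (\<sigma> v)) / m"
    using m unfolding xv_def m_def tau_unif_eq[OF v(1)] by (simp add: field_simps)
  moreover have "\<sigma> v \<le> M" using permutes_in_seg[OF \<sigma> v(1)] by simp
  ultimately have xv: "0 \<le> xv" "xv \<le> real K / m"
    using v(2) m by (auto simp: divide_right_mono)
  have xu: "1 - tau_unif M \<sigma> u = \<Delta> + xv" unfolding \<Delta>_def xv_def by simp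
  have "0 < \<Delta>"
    using cp tau_unif_less_iff[OF M, of u v \<sigma>] unfolding critical_pair_def \<Delta>_def by auto
  show ?thesis
  proof (cases "real K / m \<le> \<Delta>")
    case True
    then have "\<Delta>\<^sup>2 / (2 * \<Delta>) \<le> \<Delta>\<^sup>2 / (\<Delta> + xv)"
      using xv \<open>0 < \<Delta>\<close> by (intro divide_left_mono) auto
    moreover have "\<Delta>\<^sup>2 / (2 * \<Delta>) = \<Delta> / 2" using \<open>0 < \<Delta>\<close> by (simp add: power2_eq_square)
    ultimately show ?thesis using gap(1) unfolding xu \<Delta>_def[symmetric] by linarith
  next
    case False
    then have "\<Delta>\<^sup>2 / (2 * (real K / m)) \<le> \<Delta>\<^sup>2 / (\<Delta> + xv)"
      using xv \<open>0 < \<Delta>\<close> m K by (intro divide_left_mono) auto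
    moreover have "\<epsilon> / 4 \<le> \<Delta>\<^sup>2 / (2 * (real K / m))"
      using gap(2) m K by (simp add: field_simps)
    ultimately show ?thesis unfolding xu \<Delta>_def[symmetric] by linarith
  qed
qed

lemma critical_pair_misorder_prob_le:
  assumes cp: "critical_pair M K \<epsilon> \<sigma> v u" and \<sigma>: "\<sigma> permutes {1..M}" and M: "2 \<le> M" and K: "1 \<le> K"
    and \<epsilon>: "0 < \<epsilon>" and \<delta>: "0 < \<delta>" "\<delta> < 1"
    and n: "64 * ln (2 * real M / \<delta>) / \<epsilon> \<le> real n"
  shows "measure_pmf.prob (run (round_robin M) (tau_unif M \<sigma>) (n * M)) {h. failures u h \<le> failures v h}
      \<le> \<delta> / (real M)\<^sup>2"
proof -
  define \<tau> where "\<tau> = tau_unif M \<sigma>"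
  define L where "L = ln (2 * real M / \<delta>)"
  have uv: "u \<in> {1..M}" "v \<in> {1..M}" "u \<noteq> v" and less: "\<tau> u < \<tau> v"
    using cp tau_unif_less_iff[OF M, of u v \<sigma>] unfolding critical_pair_def \<tau>_def by auto
  have "\<epsilon> / 4 \<le> (\<tau> v - \<tau> u)\<^sup>2 / (1 - \<tau> u)"
    unfolding \<tau>_def by (rule critical_pair_gap_ge[OF cp \<sigma> M K])
  from mult_left_mono[OF this, of "real n"]
  have "real n * \<epsilon> / 32 \<le> real n * (\<tau> v - \<tau> u)\<^sup>2 / (8 * (1 - \<tau> u))"
    using less tau_unif_range[OF \<sigma>, of v] unfolding \<tau>_def by (simp add: divide_simps algebra_simps)
  moreover have "64 * L \<le> real n * \<epsilon>" using n \<epsilon> unfolding L_def by (simp add: divide_simps)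
  ultimately have exponent: "2 * L \<le> real n * (\<tau> v - \<tau> u)\<^sup>2 / (8 * (1 - \<tau> u))" by linarith
  have "exp (- L) = \<delta> / (2 * real M)"
    using \<delta> M unfolding L_def by (simp add: exp_minus)
  moreover have "exp (- (2 * L)) = (exp (- L))\<^sup>2" by (simp add: power2_eq_square exp_add[symmetric])
  ultimately have exp_L: "exp (- (2 * L)) = (\<delta> / (2 * real M))\<^sup>2" by simp
  have "measure_pmf.prob (run (round_robin M) \<tau> (n * M)) {h. failures u h \<le> failures v h}
      \<le> exp (- (real n * (\<tau> v - \<tau> u)\<^sup>2 / (8 * (1 - \<tau> u))))"
    using round_robin_misorder_prob_le[OF _ uv _ less] M tau_unif_range[OF \<sigma>] unfolding \<tau>_def by simp
  also have "\<dots> \<le> exp (- (2 * L))" using exponent by simp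
  also have "\<dots> = (\<delta> / (2 * real M))\<^sup>2" by (fact exp_L)
  also have "\<dots> \<le> \<delta> / (real M)\<^sup>2" using \<delta> M by (simp add: power2_eq_square divide_simps)
  finally show ?thesis unfolding \<tau>_def .
qed

lemma round_robin_good_alloc_prob:
  assumes \<sigma>: "\<sigma> permutes {1..M}" and M: "2 \<le> M" and K: "1 \<le> K" "K \<le> M"
    and \<epsilon>: "0 < \<epsilon>" and \<delta>: "0 < \<delta>" "\<delta> < 1"
    and n: "64 * ln (2 * real M / \<delta>) / \<epsilon> \<le> real n"
  shows "1 - \<delta> \<le> measure_pmf.prob (run (round_robin M) (tau_unif M \<sigma>) (n * M))
            {h. (\<sigma>, fewest_failures M K h) \<in> good_alloc M K \<epsilon>}"
proof -
  let ?P = "run (round_robin M) (tau_unif M \<sigma>) (n * M)"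
  define C where "C = {(v, u). critical_pair M K \<epsilon> \<sigma> v u}"
  define E where "E = (\<Union>p\<in>C. {h. failures (snd p) h \<le> failures (fst p) h})"
  have C: "finite C" "card C \<le> M * M"
  proof -
    have "C \<subseteq> {1..M} \<times> {1..M}" unfolding C_def critical_pair_def by auto
    then show "finite C" "card C \<le> M * M"
      using finite_subset card_mono[of "{1..M} \<times> {1..M}" C] by (auto simp: card_cartesian_product)
  qed
  have "measure_pmf.prob ?P E \<le> (\<Sum>p\<in>C. measure_pmf.prob ?P {h. failures (snd p) h \<le> failures (fst p) h})"
    unfolding E_def by (rule measure_pmf.finite_measure_subadditive_finite[OF C(1)]) auto
  also have "\<dots> \<le> (\<Sum>p\<in>C. \<delta> / (real M)\<^sup>2)"
    using critical_pair_misorder_prob_le[OF _ \<sigma> M K(1) \<epsilon> \<delta> n] by (intro sum_mono) (auto simp: C_def)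
  also have "\<dots> = real (card C) * (\<delta> / (real M)\<^sup>2)" by simp
  also have "\<dots> \<le> real (M * M) * (\<delta> / (real M)\<^sup>2)"
  proof (rule mult_right_mono)
    show "real (card C) \<le> real (M * M)" using C(2) by (simp only: of_nat_le_iff)
  qed (use \<delta> in simp)
  also have "\<dots> = \<delta>" using M by (simp add: power2_eq_square)
  finally have prob_E: "measure_pmf.prob ?P E \<le> \<delta>" .
  have "- E \<subseteq> {h. (\<sigma>, fewest_failures M K h) \<in> good_alloc M K \<epsilon>}"
  proof
    fix h assume "h \<in> - E"
    then have "failures v h < failures u h" if "critical_pair M K \<epsilon> \<sigma> v u" for v u
      using that unfolding E_def C_def by force
    then show "h \<in> {h. (\<sigma>, fewest_failures M K h) \<in> good_alloc M K \<epsilon>}"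
      using good_alloc_if_critical_pairs_ordered[OF \<sigma> M K \<epsilon> fewest_failures_props[OF K(2)]] by simp
  qed
  then have "measure_pmf.prob ?P (- E) \<le> measure_pmf.prob ?P {h. (\<sigma>, fewest_failures M K h) \<in> good_alloc M K \<epsilon>}"
    by (rule measure_pmf.finite_measure_mono) simp
  then show ?thesis using measure_pmf.prob_compl[of E ?P] prob_E by (simp add: Compl_eq_Diff_UNIV)
qed

lemma upper_bound:
  assumes M: "2 \<le> M" and K: "1 \<le> K" "K \<le> M" and \<epsilon>: "0 < \<epsilon>" "\<epsilon> < 1" and \<delta>: "0 < \<delta>" "\<delta> < 1"
  shows "\<exists>N pol (out :: hist \<Rightarrow> nat set pmf).
           real N \<le> 65 * real M * ln (2 * real M / \<delta>) / \<epsilon> \<and>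
           measure_pmf.prob (cate_experiment M N pol out) (good_alloc M K \<epsilon>) \<ge> 1 - \<delta>"
proof -
  define L where "L = ln (2 * real M / \<delta>)"
  define n where "n = nat \<lceil>64 * L / \<epsilon>\<rceil>"
  define out where "out h = return_pmf (fewest_failures M K h)" for h
  have "exp 1 \<le> 2 * real M / \<delta>"
  proof -
    have "exp (1::real) \<le> 3" using exp_le by simp
    also have "3 \<le> 2 * real M / \<delta>" using M \<delta> by (simp add: divide_simps)
    finally show ?thesis .
  qed
  then have "1 \<le> L" unfolding L_def using M \<delta> by (subst ln_ge_iff) auto
  then have "1 \<le> L / \<epsilon>" using \<epsilon> by (simp add: divide_simps)
  then have n: "64 * L / \<epsilon> \<le> real n" "real n \<le> 65 * L / \<epsilon>"
    unfolding n_def by linarith+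
  have "real (n * M) \<le> 65 * real M * L / \<epsilon>"
    using mult_right_mono[OF n(2), of "real M"] by (simp add: field_simps)
  moreover have "1 - \<delta> \<le> measure_pmf.prob (cate_experiment M (n * M) (round_robin M) out) (good_alloc M K \<epsilon>)"
  proof -
    have "(\<integral>h. measure_pmf.prob (out h) (Pair \<sigma> -` good_alloc M K \<epsilon>) \<partial>run (round_robin M) (tau_unif M \<sigma>) (n * M))
        = measure_pmf.prob (run (round_robin M) (tau_unif M \<sigma>) (n * M)) {h. (\<sigma>, fewest_failures M K h) \<in> good_alloc M K \<epsilon>}"
      for \<sigma>
    proof -
      have "indicator (Pair \<sigma> -` good_alloc M K \<epsilon>) (fewest_failures M K h)
          = (indicator {h. (\<sigma>, fewest_failures M K h) \<in> good_alloc M K \<epsilon>} h :: real)" for h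
        by (simp split: split_indicator)
      then show ?thesis unfolding out_def measure_return_pmf by simp
    qed
    then have prob_eq: "measure_pmf.prob (cate_experiment M (n * M) (round_robin M) out) (good_alloc M K \<epsilon>)
        = (\<Sum>\<sigma>\<in>unit_perms M. measure_pmf.prob (run (round_robin M) (tau_unif M \<sigma>) (n * M))
              {h. (\<sigma>, fewest_failures M K h) \<in> good_alloc M K \<epsilon>}) / fact M"
      by (simp add: prob_cate_experiment)
    have "1 - \<delta> = (\<Sum>\<sigma>\<in>unit_perms M. 1 - \<delta>) / fact M"
      unfolding sum_constant card_unit_perms by simp
    also have "\<dots> \<le> measure_pmf.prob (cate_experiment M (n * M) (round_robin M) out) (good_alloc M K \<epsilon>)"
      unfolding prob_eq using round_robin_good_alloc_prob[OF _ M K \<epsilon>(1) \<delta> n(1)[unfolded L_def]]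
      by (intro divide_right_mono sum_mono) auto
    finally show ?thesis .
  qed
  ultimately show ?thesis unfolding L_def by blast
qed

section \<open>Lower bound: change of measure\<close>

definition sample_lr :: "(nat \<Rightarrow> real) \<Rightarrow> (nat \<Rightarrow> real) \<Rightarrow> nat set \<Rightarrow> nat \<times> bool \<Rightarrow> real" where
  "sample_lr \<tau> \<tau>' W x = (if fst x \<in> W
     then pmf (bernoulli_pmf (\<tau>' (fst x))) (snd x) / pmf (bernoulli_pmf (\<tau> (fst x))) (snd x) else 1)"

definition hist_lr :: "(nat \<Rightarrow> real) \<Rightarrow> (nat \<Rightarrow> real) \<Rightarrow> nat set \<Rightarrow> hist \<Rightarrow> real" where
  "hist_lr \<tau> \<tau>' W h = prod_list (map (sample_lr \<tau> \<tau>' W) h)"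

lemma hist_lr_snoc: "hist_lr \<tau> \<tau>' W (h @ [x]) = hist_lr \<tau> \<tau>' W h * sample_lr \<tau> \<tau>' W x"
  by (simp add: hist_lr_def)

lemma sample_lr_nonneg: "0 \<le> sample_lr \<tau> \<tau>' W x"
  by (simp add: sample_lr_def)

lemma hist_lr_nonneg: "0 \<le> hist_lr \<tau> \<tau>' W h"
  unfolding hist_lr_def by (induction h) (auto simp: sample_lr_nonneg)

lemma nn_integral_bernoulli_change_measure:
  assumes "0 < a" "a < 1" "0 \<le> b" "b \<le> 1"
  shows "(\<integral>\<^sup>+x. F x \<partial>bernoulli_pmf b) =
     (\<integral>\<^sup>+x. F x * ennreal (pmf (bernoulli_pmf b) x / pmf (bernoulli_pmf a) x) \<partial>bernoulli_pmf a)"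
proof -
  have "ennreal (b / a) * ennreal a = ennreal b" "ennreal ((1 - b) / (1 - a)) * ennreal (1 - a) = ennreal (1 - b)"
    using assms by (simp_all add: ennreal_mult''[symmetric])
  then show ?thesis using assms by (simp add: mult.assoc)
qed

definition bernoulli_affinity :: "real \<Rightarrow> real \<Rightarrow> real" where
  "bernoulli_affinity p q = sqrt (p * q) + sqrt ((1 - p) * (1 - q))"

lemma nn_integral_sqrt_bernoulli_ratio:
  assumes "0 < p" "p < 1" "0 \<le> q" "q \<le> 1"
  shows "(\<integral>\<^sup>+x. ennreal (sqrt (pmf (bernoulli_pmf q) x / pmf (bernoulli_pmf p) x)) \<partial>bernoulli_pmf p)
       = ennreal (bernoulli_affinity p q)"
proof -
  have "sqrt (x / y) * y = sqrt (y * x)" if "0 < y" for x y :: real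
    using that by (smt (verit) mult.commute real_div_sqrt real_sqrt_divide real_sqrt_mult times_divide_eq_right)
  from this[of p q] this[of "1 - p" "1 - q"]
  have "sqrt (q / p) * p = sqrt (p * q)" "sqrt ((1 - q) / (1 - p)) * (1 - p) = sqrt ((1 - p) * (1 - q))"
    using assms by simp_all
  then show ?thesis
    using assms by (simp add: bernoulli_affinity_def ennreal_mult''[symmetric] ennreal_plus[symmetric] del: ennreal_plus)
qed

text \<open>Applied with x the square root of the likelihood ratio and integrated, this gives the two-point bound.\<close>

lemma two_point_pointwise_le:
  fixes f g x t :: real
  assumes "0 \<le> f" "0 \<le> g" "f + g \<le> 1" "0 \<le> x" "0 < t"
  shows "f + g * x\<^sup>2 + x / (2*t) \<le> (1/2 + 1/(4*t) + t/4) * (1 + x\<^sup>2) + t/2 * x"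
proof -
  have max: "f + g * x\<^sup>2 \<le> (1 + x\<^sup>2)/2 + \<bar>x\<^sup>2 - 1\<bar>/2"
  proof (cases "x\<^sup>2 \<le> 1")
    case True
    then have "g * x\<^sup>2 \<le> g" using assms by (simp add: mult_left_le)
    moreover have "(1 + x\<^sup>2)/2 + \<bar>x\<^sup>2 - 1\<bar>/2 = 1" using True by (simp add: field_simps)
    ultimately show ?thesis using assms by linarith
  next
    case False
    then have "f \<le> f * x\<^sup>2" using assms by (simp add: mult_le_cancel_left1)
    then have "f + g * x\<^sup>2 \<le> (f + g) * x\<^sup>2" by (simp add: distrib_right)
    also have "\<dots> \<le> x\<^sup>2" using assms by (simp add: mult_left_le_one_le)
    finally have "f + g * x\<^sup>2 \<le> x\<^sup>2" .
    moreover have "(1 + x\<^sup>2)/2 + \<bar>x\<^sup>2 - 1\<bar>/2 = x\<^sup>2" using False by (simp add: field_simps)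
    ultimately show ?thesis by linarith
  qed
  have sq: "0 \<le> (\<bar>x - 1\<bar> - t * (x + 1))\<^sup>2" by simp
  have ab: "\<bar>x\<^sup>2 - 1\<bar> = \<bar>x - 1\<bar> * (x + 1)"
  proof -
    have "x\<^sup>2 - 1 = (x - 1) * (x + 1)" by (simp add: power2_eq_square algebra_simps)
    then have "\<bar>x\<^sup>2 - 1\<bar> = \<bar>x - 1\<bar> * \<bar>x + 1\<bar>" by (simp add: abs_mult)
    then show ?thesis using assms by simp
  qed
  have am0: "2 * t * \<bar>x\<^sup>2 - 1\<bar> \<le> (x - 1)\<^sup>2 + t\<^sup>2 * (x + 1)\<^sup>2"
    using sq unfolding ab by (simp add: power2_eq_square algebra_simps)
  have am: "\<bar>x\<^sup>2 - 1\<bar>/2 \<le> (x - 1)\<^sup>2/(4*t) + t * (x + 1)\<^sup>2 / 4"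
  proof -
    have "\<bar>x\<^sup>2 - 1\<bar>/2 = (2 * t * \<bar>x\<^sup>2 - 1\<bar>) / (4*t)" using assms by simp
    also have "\<dots> \<le> ((x - 1)\<^sup>2 + t\<^sup>2 * (x + 1)\<^sup>2) / (4*t)" by (rule divide_right_mono[OF am0]) (use assms in simp)
    also have "\<dots> = (x - 1)\<^sup>2/(4*t) + t * (x + 1)\<^sup>2 / 4" using assms by (simp add: field_simps power2_eq_square)
    finally show ?thesis .
  qed
  have "f + g * x\<^sup>2 + x / (2*t) \<le> (1 + x\<^sup>2)/2 + (x - 1)\<^sup>2/(4*t) + t * (x + 1)\<^sup>2 / 4 + x / (2*t)"
    using max am by linarith
  also have "\<dots> = (1/2 + 1/(4*t) + t/4) * (1 + x\<^sup>2) + t/2 * x"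
    using assms by (simp add: field_simps power2_eq_square)
  finally show ?thesis .
qed

locale perturbed_effects =
  fixes \<tau> \<tau>' :: "nat \<Rightarrow> real" and W :: "nat set"
  assumes same: "\<And>w. w \<notin> W \<Longrightarrow> \<tau>' w = \<tau> w"
    and inner: "\<And>w. w \<in> W \<Longrightarrow> 0 < \<tau> w \<and> \<tau> w < 1"
    and range': "\<And>w. 0 \<le> \<tau>' w \<and> \<tau>' w \<le> 1"
begin

lemma nn_integral_run_change_measure:
  shows "(\<integral>\<^sup>+h. F h \<partial>run pol \<tau>' n) = (\<integral>\<^sup>+h. F h * ennreal (hist_lr \<tau> \<tau>' W h) \<partial>run pol \<tau> n)"
proof (induction n arbitrary: F)
  case (Suc n)
  define G where "G h = (\<integral>\<^sup>+u. \<integral>\<^sup>+b. F (h @ [(u, b)]) \<partial>bernoulli_pmf (\<tau>' u) \<partial>pol h)" for h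
  have step: "(\<integral>\<^sup>+b. F (h @ [(u, b)]) \<partial>bernoulli_pmf (\<tau>' u)) =
      (\<integral>\<^sup>+b. F (h @ [(u, b)]) * ennreal (sample_lr \<tau> \<tau>' W (u, b)) \<partial>bernoulli_pmf (\<tau> u))" for h u
  proof (cases "u \<in> W")
    case True
    then show ?thesis using inner[OF True] range'[of u]
      by (subst nn_integral_bernoulli_change_measure[of "\<tau> u"]) (auto simp: sample_lr_def)
  qed (simp add: sample_lr_def same)
  have "G h * ennreal (hist_lr \<tau> \<tau>' W h) = (\<integral>\<^sup>+u. \<integral>\<^sup>+b. F (h @ [(u, b)]) *
      ennreal (hist_lr \<tau> \<tau>' W (h @ [(u, b)])) \<partial>bernoulli_pmf (\<tau> u) \<partial>pol h)" for h
    unfolding G_def step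
    by (simp add: nn_integral_multc[symmetric] hist_lr_snoc ennreal_mult'' hist_lr_nonneg sample_lr_nonneg
        mult.assoc mult.commute[of "ennreal (hist_lr _ _ _ _)"])
  then show ?case using Suc.IH[of G] by (simp add: G_def)
qed (simp add: hist_lr_def)

lemma nn_integral_sqrt_hist_lr_le:
  shows "(\<integral>\<^sup>+h. ennreal (sqrt (hist_lr \<tau> \<tau>' W h)) * F h \<partial>run pol \<tau> n)
      \<le> ennreal (1/2) * ((\<integral>\<^sup>+h. F h \<partial>run pol \<tau> n) + (\<integral>\<^sup>+h. F h \<partial>run pol \<tau>' n))"
proof -
  have sqrt_le: "ennreal (sqrt L) \<le> ennreal (1/2) + ennreal (1/2) * ennreal L" if "0 \<le> L" for L
  proof -
    have "ennreal (sqrt L) \<le> ennreal (1/2 + 1/2 * L)"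
      using arith_geo_mean_sqrt[of 1 L] that by (intro ennreal_leI) simp
    also have "\<dots> = ennreal (1/2) + ennreal (1/2) * ennreal L"
      using that by (simp only: ennreal_plus ennreal_mult)
    finally show ?thesis .
  qed
  have "(\<integral>\<^sup>+h. ennreal (sqrt (hist_lr \<tau> \<tau>' W h)) * F h \<partial>run pol \<tau> n)
      \<le> (\<integral>\<^sup>+h. ennreal (1/2) * F h + ennreal (1/2) * (F h * ennreal (hist_lr \<tau> \<tau>' W h)) \<partial>run pol \<tau> n)"
  proof (rule nn_integral_mono)
    fix h
    have "ennreal (sqrt (hist_lr \<tau> \<tau>' W h)) * F h \<le> (ennreal (1/2) + ennreal (1/2) * ennreal (hist_lr \<tau> \<tau>' W h)) * F h"
      by (rule mult_right_mono[OF sqrt_le[OF hist_lr_nonneg]]) simp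
    then show "ennreal (sqrt (hist_lr \<tau> \<tau>' W h)) * F h
        \<le> ennreal (1/2) * F h + ennreal (1/2) * (F h * ennreal (hist_lr \<tau> \<tau>' W h))"
      by (simp only: distrib_right distrib_left mult_ac)
  qed
  also have "\<dots> = ennreal (1/2) * ((\<integral>\<^sup>+h. F h \<partial>run pol \<tau> n) + (\<integral>\<^sup>+h. F h \<partial>run pol \<tau>' n))"
    by (simp add: nn_integral_add nn_integral_cmult distrib_left
        nn_integral_run_change_measure[symmetric])
  finally show ?thesis .
qed

lemma bhattacharyya_sample_ge:
  fixes p :: "nat pmf"
  assumes affinity: "\<And>w. w \<in> W \<Longrightarrow> 1 \<le> bernoulli_affinity (\<tau> w) (\<tau>' w) + \<eta>" and "0 \<le> \<eta>"
  shows "1 \<le> (\<integral>\<^sup>+u. \<integral>\<^sup>+b. ennreal (sqrt (sample_lr \<tau> \<tau>' W (u, b))) \<partial>bernoulli_pmf (\<tau> u) \<partial>p)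
          + ennreal \<eta> * emeasure (measure_pmf p) W"
proof -
  have "1 \<le> (\<integral>\<^sup>+b. ennreal (sqrt (sample_lr \<tau> \<tau>' W (u, b))) \<partial>bernoulli_pmf (\<tau> u)) + ennreal \<eta> * indicator W u" for u
  proof (cases "u \<in> W")
    case True
    have "0 \<le> bernoulli_affinity (\<tau> u) (\<tau>' u)"
      using inner[OF True] range'[of u] by (simp add: bernoulli_affinity_def)
    then show ?thesis
      using inner[OF True] range'[of u] affinity[OF True] \<open>0 \<le> \<eta>\<close> nn_integral_sqrt_bernoulli_ratio[of "\<tau> u" "\<tau>' u"]
      by (simp add: sample_lr_def ennreal_plus[symmetric] del: ennreal_plus)
  qed (simp add: sample_lr_def)
  then have "(\<integral>\<^sup>+u. 1 \<partial>p) \<le> (\<integral>\<^sup>+u. (\<integral>\<^sup>+b. ennreal (sqrt (sample_lr \<tau> \<tau>' W (u, b))) \<partial>bernoulli_pmf (\<tau> u)) + ennreal \<eta> * indicator W u \<partial>p)"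
    by (intro nn_integral_mono)
  then show ?thesis by (simp add: nn_integral_add nn_integral_cmult)
qed

lemma bhattacharyya_run_ge:
  assumes affinity: "\<And>w. w \<in> W \<Longrightarrow> 1 \<le> bernoulli_affinity (\<tau> w) (\<tau>' w) + \<eta>" and \<eta>: "0 \<le> \<eta>"
  shows "1 \<le> (\<integral>\<^sup>+h. ennreal (sqrt (hist_lr \<tau> \<tau>' W h)) \<partial>run pol \<tau> n)
     + ennreal (\<eta> / 2) * (\<Sum>j<n. (\<integral>\<^sup>+h. emeasure (pol h) W \<partial>run pol \<tau> j) + (\<integral>\<^sup>+h. emeasure (pol h) W \<partial>run pol \<tau>' j))"
proof (induction n)
  case (Suc n)
  define B where "B n = (\<integral>\<^sup>+h. ennreal (sqrt (hist_lr \<tau> \<tau>' W h)) \<partial>run pol \<tau> n)" for n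
  define A where "A j = (\<integral>\<^sup>+h. emeasure (pol h) W \<partial>run pol \<tau> j) + (\<integral>\<^sup>+h. emeasure (pol h) W \<partial>run pol \<tau>' j)" for j
  define I where "I h = (\<integral>\<^sup>+u. \<integral>\<^sup>+b. ennreal (sqrt (sample_lr \<tau> \<tau>' W (u, b))) \<partial>bernoulli_pmf (\<tau> u) \<partial>pol h)" for h
  have "ennreal (sqrt (hist_lr \<tau> \<tau>' W h)) * I h = (\<integral>\<^sup>+u. \<integral>\<^sup>+b. ennreal (sqrt (hist_lr \<tau> \<tau>' W (h @ [(u, b)])))
      \<partial>bernoulli_pmf (\<tau> u) \<partial>pol h)" for h
    unfolding I_def
    by (simp add: nn_integral_cmult[symmetric] hist_lr_snoc real_sqrt_mult ennreal_mult'' hist_lr_nonneg sample_lr_nonneg)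
  then have B_Suc: "B (Suc n) = (\<integral>\<^sup>+h. ennreal (sqrt (hist_lr \<tau> \<tau>' W h)) * I h \<partial>run pol \<tau> n)"
    unfolding B_def by simp
  have "B n = (\<integral>\<^sup>+h. ennreal (sqrt (hist_lr \<tau> \<tau>' W h)) * 1 \<partial>run pol \<tau> n)" unfolding B_def by simp
  also have "\<dots> \<le> (\<integral>\<^sup>+h. ennreal (sqrt (hist_lr \<tau> \<tau>' W h)) * (I h + ennreal \<eta> * emeasure (pol h) W) \<partial>run pol \<tau> n)"
    unfolding I_def using bhattacharyya_sample_ge[OF affinity \<eta>] by (intro nn_integral_mono mult_left_mono) auto
  also have "\<dots> = B (Suc n) + ennreal \<eta> * (\<integral>\<^sup>+h. ennreal (sqrt (hist_lr \<tau> \<tau>' W h)) * emeasure (pol h) W \<partial>run pol \<tau> n)"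
    unfolding B_Suc by (simp add: distrib_left nn_integral_add nn_integral_cmult[symmetric] mult.left_commute)
  also have "\<dots> \<le> B (Suc n) + ennreal \<eta> * (ennreal (1/2) * A n)"
    unfolding A_def by (intro add_left_mono mult_left_mono nn_integral_sqrt_hist_lr_le) simp
  also have "\<dots> = B (Suc n) + ennreal (\<eta> / 2) * A n"
  proof -
    have "ennreal \<eta> * ennreal (1/2) = ennreal (\<eta> / 2)" using ennreal_mult[of \<eta> "1/2"] \<eta> by simp
    then show ?thesis by (simp only: mult.assoc[symmetric])
  qed
  finally have "B n \<le> B (Suc n) + ennreal (\<eta> / 2) * A n" .
  with Suc.IH have "1 \<le> B (Suc n) + ennreal (\<eta> / 2) * A n + ennreal (\<eta> / 2) * (\<Sum>j<n. A j)"
    unfolding A_def B_def by (meson add_right_mono order_trans)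
  also have "\<dots> = B (Suc n) + ennreal (\<eta> / 2) * (\<Sum>j<Suc n. A j)"
    by (simp add: distrib_left add.assoc)
  finally show ?case unfolding A_def B_def .
qed (simp add: hist_lr_def)

lemma integral_mult_hist_lr:
  fixes g :: "hist \<Rightarrow> real"
  assumes g: "\<And>h. 0 \<le> g h" "\<And>h. g h \<le> 1"
  shows "integrable (run pol \<tau> n) (\<lambda>h. g h * hist_lr \<tau> \<tau>' W h)"
    and "(\<integral>h. g h * hist_lr \<tau> \<tau>' W h \<partial>run pol \<tau> n) = (\<integral>h. g h \<partial>run pol \<tau>' n)"
proof -
  have "(\<integral>\<^sup>+h. ennreal (g h * hist_lr \<tau> \<tau>' W h) \<partial>run pol \<tau> n) = (\<integral>\<^sup>+h. ennreal (g h) \<partial>run pol \<tau>' n)"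
    using nn_integral_run_change_measure[where F="\<lambda>h. ennreal (g h)"] g hist_lr_nonneg by (simp add: ennreal_mult'')
  also have "\<dots> = ennreal (\<integral>h. g h \<partial>run pol \<tau>' n)" by (rule nn_integral_measure_pmf_bounded) (use g in auto)
  finally have "integrable (run pol \<tau> n) (\<lambda>h. g h * hist_lr \<tau> \<tau>' W h) \<and>
      (\<integral>h. g h * hist_lr \<tau> \<tau>' W h \<partial>run pol \<tau> n) = (\<integral>h. g h \<partial>run pol \<tau>' n)"
    by (subst nn_integral_eq_integrable[symmetric]) (use g hist_lr_nonneg integral_nonneg_AE in auto)
  then show "integrable (run pol \<tau> n) (\<lambda>h. g h * hist_lr \<tau> \<tau>' W h)"
    and "(\<integral>h. g h * hist_lr \<tau> \<tau>' W h \<partial>run pol \<tau> n) = (\<integral>h. g h \<partial>run pol \<tau>' n)" by auto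
qed

lemma integrable_sqrt_hist_lr: "integrable (run pol \<tau> n) (\<lambda>h. sqrt (hist_lr \<tau> \<tau>' W h))"
proof (rule Bochner_Integration.integrable_bound)
  show "integrable (run pol \<tau> n) (\<lambda>h. (1 + hist_lr \<tau> \<tau>' W h) / 2)"
    using integral_mult_hist_lr(1)[of "\<lambda>_. 1"] by simp
  show "AE h in run pol \<tau> n. norm (sqrt (hist_lr \<tau> \<tau>' W h)) \<le> norm ((1 + hist_lr \<tau> \<tau>' W h) / 2)"
    using arith_geo_mean_sqrt[of 1] hist_lr_nonneg by auto
qed simp

lemma bhattacharyya_run_ge_real:
  assumes affinity: "\<And>w. w \<in> W \<Longrightarrow> 1 \<le> bernoulli_affinity (\<tau> w) (\<tau>' w) + \<eta>" and \<eta>: "0 \<le> \<eta>"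
  shows "1 \<le> (\<integral>h. sqrt (hist_lr \<tau> \<tau>' W h) \<partial>run pol \<tau> n) + \<eta> / 2 *
      (\<Sum>j<n. (\<integral>h. measure_pmf.prob (pol h) W \<partial>run pol \<tau> j) + (\<integral>h. measure_pmf.prob (pol h) W \<partial>run pol \<tau>' j))"
    (is "1 \<le> ?B + \<eta> / 2 * ?S")
proof -
  have "?B \<ge> 0" "?S \<ge> 0" by (auto intro!: integral_nonneg_AE sum_nonneg simp: hist_lr_nonneg)
  have "(\<integral>\<^sup>+h. ennreal (sqrt (hist_lr \<tau> \<tau>' W h)) \<partial>run pol \<tau> n) = ennreal ?B"
    by (rule nn_integral_eq_integral[OF integrable_sqrt_hist_lr]) (use hist_lr_nonneg in auto)
  moreover have "(\<integral>\<^sup>+h. emeasure (pol h) W \<partial>run pol \<rho> j) = ennreal (\<integral>h. measure_pmf.prob (pol h) W \<partial>run pol \<rho> j)" for \<rho> j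
    by (simp add: measure_pmf.emeasure_eq_measure nn_integral_measure_pmf_bounded[where C=1])
  ultimately have "ennreal 1 \<le> ennreal ?B + ennreal (\<eta> / 2) * ennreal ?S"
    using bhattacharyya_run_ge[OF affinity \<eta>, of pol n]
    by (simp add: ennreal_plus[symmetric] sum_nonneg integral_nonneg_AE del: ennreal_plus)
  also have "\<dots> = ennreal (?B + \<eta> / 2 * ?S)"
    using \<eta> \<open>?B \<ge> 0\<close> \<open>?S \<ge> 0\<close> by (simp only: ennreal_mult[symmetric] ennreal_plus[symmetric]) auto
  finally show ?thesis using \<open>?B \<ge> 0\<close> \<open>?S \<ge> 0\<close> \<eta> by (subst (asm) ennreal_le_iff) auto
qed

lemma two_point_bound:
  assumes affinity: "\<And>w. w \<in> W \<Longrightarrow> 1 \<le> bernoulli_affinity (\<tau> w) (\<tau>' w) + \<eta>" and \<eta>: "0 \<le> \<eta>"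
    and t: "0 < t" and fg: "\<And>h. 0 \<le> f h" "\<And>h. 0 \<le> g h" "\<And>h. f h + g h \<le> 1"
  shows "(\<integral>h. f h \<partial>run pol \<tau> n) + (\<integral>h. g h \<partial>run pol \<tau>' n) \<le> 1 + t + \<eta> / (4 * t) *
     (\<Sum>j<n. (\<integral>h. measure_pmf.prob (pol h) W \<partial>run pol \<tau> j) + (\<integral>h. measure_pmf.prob (pol h) W \<partial>run pol \<tau>' j))"
    (is "?lhs \<le> 1 + t + \<eta> / (4 * t) * ?S")
proof -
  let ?P = "run pol \<tau> n"
  define L where "L h = hist_lr \<tau> \<tau>' W h" for h
  define B where "B = (\<integral>h. sqrt (L h) \<partial>?P)"
  define a where "a = 1/2 + 1/(4*t) + t/4"
  have L_nonneg: "0 \<le> L h" for h unfolding L_def by (rule hist_lr_nonneg)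
  have L_int: "integrable ?P L" "(\<integral>h. L h \<partial>?P) = 1"
    using integral_mult_hist_lr[of "\<lambda>_. 1"] unfolding L_def by simp_all
  have f_le: "f h \<le> 1" and g_le: "g h \<le> 1" for h using fg(1-3)[of h] by linarith+
  have gL_int: "integrable ?P (\<lambda>h. g h * L h)" "(\<integral>h. g h * L h \<partial>?P) = (\<integral>h. g h \<partial>run pol \<tau>' n)"
    using integral_mult_hist_lr[OF fg(2) g_le] unfolding L_def by simp_all
  from f_le have f_int: "integrable ?P f"
    by (intro measure_pmf.integrable_const_bound[where B=1]) (use fg(1) in auto)
  have sqrt_int: "integrable ?P (\<lambda>h. sqrt (L h))" unfolding L_def by (rule integrable_sqrt_hist_lr)
  have "B \<le> (\<integral>h. (1 + L h) / 2 \<partial>?P)"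
    unfolding B_def using L_int sqrt_int arith_geo_mean_sqrt[of 1] L_nonneg
    by (intro integral_mono) auto
  then have "B \<le> 1" using L_int by simp
  have "(\<integral>h. f h + g h * L h + sqrt (L h) / (2*t) \<partial>?P) \<le> (\<integral>h. a * (1 + L h) + t/2 * sqrt (L h) \<partial>?P)"
  proof (rule integral_mono)
    fix h
    have "f h + g h * (sqrt (L h))\<^sup>2 + sqrt (L h) / (2*t) \<le> a * (1 + (sqrt (L h))\<^sup>2) + t/2 * sqrt (L h)"
      unfolding a_def by (rule two_point_pointwise_le) (use fg t L_nonneg in auto)
    then show "f h + g h * L h + sqrt (L h) / (2*t) \<le> a * (1 + L h) + t/2 * sqrt (L h)"
      using L_nonneg[of h] by simp
  qed (use f_int gL_int L_int sqrt_int in auto)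
  then have "?lhs + B / (2*t) \<le> 2 * a + t/2 * B"
    using f_int gL_int L_int sqrt_int unfolding B_def by simp
  moreover have "1 \<le> B + \<eta> / 2 * ?S"
    unfolding B_def L_def by (rule bhattacharyya_run_ge_real[OF affinity \<eta>])
  then have "1 / (2*t) \<le> B / (2*t) + \<eta> / (4*t) * ?S" using t by (simp add: field_simps)
  moreover have "2 * a = 1 + 1/(2*t) + t/2" unfolding a_def by (simp add: field_simps)
  moreover have "t/2 * B \<le> t/2" using \<open>B \<le> 1\<close> t by simp
  ultimately show ?thesis by linarith
qed

end

lemma sq_diff_bound:
  fixes x y :: real
  assumes "0 \<le> x" "0 \<le> y" "1/4 \<le> (x + y)\<^sup>2"
  shows "(x - y)\<^sup>2 \<le> 4 * (x\<^sup>2 - y\<^sup>2)\<^sup>2"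
proof -
  have "(x\<^sup>2 - y\<^sup>2)\<^sup>2 = (x - y)\<^sup>2 * (x + y)\<^sup>2" by (simp add: power2_eq_square algebra_simps)
  moreover have "(x - y)\<^sup>2 * (1/4) \<le> (x - y)\<^sup>2 * (x + y)\<^sup>2"
    by (rule mult_left_mono) (use assms in auto)
  ultimately show ?thesis by simp
qed

lemma bernoulli_affinity_ge:
  fixes a b :: real
  assumes "1/8 \<le> a" "a \<le> 7/8" "1/8 \<le> b" "b \<le> 7/8"
  shows "1 \<le> bernoulli_affinity a b + 4 * (a - b)\<^sup>2"
proof -
  define x where "x = sqrt a"
  define y where "y = sqrt b"
  define x' where "x' = sqrt (1 - a)"
  define y' where "y' = sqrt (1 - b)"
  have r: "0 \<le> a" "0 \<le> b" "a \<le> 1" "b \<le> 1" using assms by linarith+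
  have xs: "x\<^sup>2 = a" "y\<^sup>2 = b" "x'\<^sup>2 = 1 - a" "y'\<^sup>2 = 1 - b" using r by (auto simp: x_def y_def x'_def y'_def)
  have nn: "0 \<le> x" "0 \<le> y" "0 \<le> x'" "0 \<le> y'" using r by (auto simp: x_def y_def x'_def y'_def)
  have "1/4 \<le> x\<^sup>2 + y\<^sup>2" using xs assms by simp
  also have "x\<^sup>2 + y\<^sup>2 \<le> (x + y)\<^sup>2" using nn by (simp add: power2_eq_square algebra_simps)
  finally have b1: "(x - y)\<^sup>2 \<le> 4 * (a - b)\<^sup>2" using sq_diff_bound[of x y] nn xs by simp
  have "1/4 \<le> x'\<^sup>2 + y'\<^sup>2" using xs assms by simp
  also have "x'\<^sup>2 + y'\<^sup>2 \<le> (x' + y')\<^sup>2" using nn by (simp add: power2_eq_square algebra_simps)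
  finally have b2: "(x' - y')\<^sup>2 \<le> 4 * (a - b)\<^sup>2" using sq_diff_bound[of x' y'] nn xs by (simp add: power2_commute)
  have e: "1 - x * y - x' * y' = ((x - y)\<^sup>2 + (x' - y')\<^sup>2) / 2"
    using xs by (simp add: power2_diff algebra_simps)
  have "sqrt (a * b) = x * y" "sqrt ((1 - a) * (1 - b)) = x' * y'"
    by (auto simp: x_def y_def x'_def y'_def real_sqrt_mult)
  moreover have "((x - y)\<^sup>2 + (x' - y')\<^sup>2) / 2 \<le> 4 * (a - b)\<^sup>2" using b1 b2 by simp
  ultimately show ?thesis using e unfolding bernoulli_affinity_def by linarith
qed

definition accuracy :: "nat \<Rightarrow> nat \<Rightarrow> (hist \<Rightarrow> nat pmf) \<Rightarrow> (hist \<Rightarrow> (nat \<Rightarrow> real) pmf) \<Rightarrow> real \<Rightarrow> nat \<Rightarrow> (nat \<Rightarrow> nat) \<Rightarrow> real" where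
  "accuracy M N pol out \<epsilon> u \<sigma> = (\<integral>h. measure_pmf.prob (out h) {est. \<bar>est u - tau_unif M \<sigma> u\<bar> \<le> \<epsilon>} \<partial>run pol (tau_unif M \<sigma>) N)"

definition expected_pulls :: "nat \<Rightarrow> nat \<Rightarrow> (hist \<Rightarrow> nat pmf) \<Rightarrow> (nat \<Rightarrow> nat) \<Rightarrow> nat \<Rightarrow> real" where
  "expected_pulls M N pol \<sigma> w = (\<Sum>j<N. \<integral>h. pmf (pol h) w \<partial>run pol (tau_unif M \<sigma>) j)"

lemma accuracy_nonneg: "0 \<le> accuracy M N pol out \<epsilon> u \<sigma>"
  unfolding accuracy_def by (rule integral_nonneg_AE) auto

lemma accuracy_le_1: "accuracy M N pol out \<epsilon> u \<sigma> \<le> 1"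
  unfolding accuracy_def
  by (rule measure_pmf.integral_le_const) (auto intro!: measure_pmf.integrable_const_bound[where B=1])

lemma prob_accurate_at:
  "measure_pmf.prob (cate_experiment M N pol out) (accurate_at M u \<epsilon>) =
     (\<Sum>\<sigma>\<in>unit_perms M. accuracy M N pol out \<epsilon> u \<sigma>) / fact M"
proof -
  have "Pair \<sigma> -` accurate_at M u \<epsilon> = {est. \<bar>est u - tau_unif M \<sigma> u\<bar> \<le> \<epsilon>}" for \<sigma>
    unfolding accurate_at_def by auto
  then show ?thesis unfolding prob_cate_experiment accuracy_def by simp
qed

lemma integrable_pmf_policy: "integrable (measure_pmf q) (\<lambda>h. pmf (pol h) w)"
  by (rule measure_pmf.integrable_const_bound[where B=1]) (auto simp: pmf_le_1)

lemma expected_pulls_nonneg: "0 \<le> expected_pulls M N pol \<sigma> w"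
  unfolding expected_pulls_def by (intro sum_nonneg integral_nonneg_AE) auto

lemma sum_expected_pulls_le:
  assumes "finite A"
  shows "(\<Sum>w\<in>A. expected_pulls M N pol \<sigma> w) \<le> real N"
proof -
  have "(\<Sum>w\<in>A. expected_pulls M N pol \<sigma> w) = (\<Sum>j<N. \<integral>h. (\<Sum>w\<in>A. pmf (pol h) w) \<partial>run pol (tau_unif M \<sigma>) j)"
    unfolding expected_pulls_def by (subst sum.swap) (simp add: integrable_pmf_policy)
  also have "\<dots> \<le> (\<Sum>j<N. 1)"
  proof (intro sum_mono measure_pmf.integral_le_const)
    show "integrable (run pol (tau_unif M \<sigma>) j) (\<lambda>h. \<Sum>w\<in>A. pmf (pol h) w)" for j
      by (simp add: integrable_pmf_policy)
    show "AE h in run pol (tau_unif M \<sigma>) j. (\<Sum>w\<in>A. pmf (pol h) w) \<le> 1" for j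
      using measure_measure_pmf_finite[OF assms, symmetric] measure_pmf.prob_le_1 by simp
  qed
  finally show ?thesis by simp
qed

lemma permutes_transpose_compose:
  assumes "\<sigma> permutes {1..M}" "u \<in> {1..M}" "v \<in> {1..M}"
  shows "Transposition.transpose (\<sigma> u) (\<sigma> v) \<circ> \<sigma> permutes {1..M}"
proof -
  have "\<sigma> u \<in> {1..M}" "\<sigma> v \<in> {1..M}" using assms permutes_in_image[OF assms(1)] by blast+
  then show ?thesis by (intro permutes_compose[OF assms(1)] permutes_swap_id)
qed

lemma tau_unif_transpose_compose:
  assumes \<sigma>: "\<sigma> permutes {1..M}" and uv: "u \<in> {1..M}" "v \<in> {1..M}"
  shows "tau_unif M (Transposition.transpose (\<sigma> u) (\<sigma> v) \<circ> \<sigma>) w =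
     (if w = u then tau_unif M \<sigma> v else if w = v then tau_unif M \<sigma> u else tau_unif M \<sigma> w)"
proof (cases "w \<in> {1..M}")
  case True
  have "\<sigma> w = \<sigma> u \<longleftrightarrow> w = u" "\<sigma> w = \<sigma> v \<longleftrightarrow> w = v"
    using permutes_inj[OF \<sigma>] by (auto dest: injD)
  then show ?thesis using True uv by (auto simp: tau_unif_eq transpose_def)
qed (use uv in \<open>auto simp: tau_unif_def\<close>)

lemma accuracy_transpose_le:
  assumes \<sigma>: "\<sigma> permutes {1..M}" and uv: "u \<in> {1..M}" "v \<in> {1..M}"
    and lower: "1/8 \<le> tau_unif M \<sigma> u" and upper: "tau_unif M \<sigma> v \<le> 7/8"
    and \<epsilon>: "0 \<le> \<epsilon>" "2 * \<epsilon> < tau_unif M \<sigma> v - tau_unif M \<sigma> u" and t: "0 < t"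
  defines "\<sigma>' \<equiv> Transposition.transpose (\<sigma> u) (\<sigma> v) \<circ> \<sigma>"
    and "d \<equiv> tau_unif M \<sigma> v - tau_unif M \<sigma> u"
  shows "accuracy M N pol out \<epsilon> u \<sigma> + accuracy M N pol out \<epsilon> u \<sigma>' \<le> 1 + t + d\<^sup>2 / t *
     (expected_pulls M N pol \<sigma> u + expected_pulls M N pol \<sigma> v + expected_pulls M N pol \<sigma>' u + expected_pulls M N pol \<sigma>' v)"
proof -
  define \<tau> where "\<tau> = tau_unif M \<sigma>"
  define \<tau>' where "\<tau>' = tau_unif M \<sigma>'"
  have \<sigma>': "\<sigma>' permutes {1..M}" unfolding \<sigma>'_def by (rule permutes_transpose_compose[OF \<sigma> uv])
  have "u \<noteq> v" using \<epsilon> by auto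
  have \<tau>': "\<tau>' w = (if w = u then \<tau> v else if w = v then \<tau> u else \<tau> w)" for w
    unfolding \<tau>_def \<tau>'_def \<sigma>'_def by (rule tau_unif_transpose_compose[OF \<sigma> uv])
  interpret perturbed_effects \<tau> \<tau>' "{u, v}"
  proof
    show "0 < \<tau> w \<and> \<tau> w < 1" if "w \<in> {u, v}" for w
      using that lower upper \<epsilon> unfolding \<tau>_def by auto
  qed (use \<tau>' tau_unif_range[OF \<sigma>'] in \<open>auto simp: \<tau>'_def\<close>)
  have affinity: "1 \<le> bernoulli_affinity (\<tau> w) (\<tau>' w) + 4 * d\<^sup>2" if "w \<in> {u, v}" for w
    using that bernoulli_affinity_ge[of "\<tau> u" "\<tau> v"] bernoulli_affinity_ge[of "\<tau> v" "\<tau> u"]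
      lower upper \<epsilon> \<tau>' \<open>u \<noteq> v\<close> unfolding \<tau>_def d_def by (auto simp: power2_commute)
  define f where "f h = measure_pmf.prob (out h) {est. \<bar>est u - \<tau> u\<bar> \<le> \<epsilon>}" for h
  define g where "g h = measure_pmf.prob (out h) {est. \<bar>est u - \<tau>' u\<bar> \<le> \<epsilon>}" for h
  have "f h + g h \<le> 1" for h
  proof -
    have "{est. \<bar>est u - \<tau> u\<bar> \<le> \<epsilon>} \<inter> {est. \<bar>est u - \<tau>' u\<bar> \<le> \<epsilon>} = {}"
      using \<epsilon> \<tau>' unfolding \<tau>_def by auto
    from measure_pmf.finite_measure_Union[OF _ _ this, of "out h"] show ?thesis
      unfolding f_def g_def by (metis measure_pmf.prob_le_1 sets_measure_pmf UNIV_I)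
  qed
  then have "(\<integral>h. f h \<partial>run pol \<tau> N) + (\<integral>h. g h \<partial>run pol \<tau>' N) \<le> 1 + t + 4 * d\<^sup>2 / (4 * t) *
     (\<Sum>j<N. (\<integral>h. measure_pmf.prob (pol h) {u, v} \<partial>run pol \<tau> j) + (\<integral>h. measure_pmf.prob (pol h) {u, v} \<partial>run pol \<tau>' j))"
    by (intro two_point_bound[OF affinity _ t]) (auto simp: f_def g_def)
  moreover have "measure_pmf.prob (pol h) {u, v} = pmf (pol h) u + pmf (pol h) v" for h
    using \<open>u \<noteq> v\<close> by (simp add: measure_measure_pmf_finite)
  ultimately show ?thesis
    unfolding accuracy_def expected_pulls_def f_def g_def \<tau>_def \<tau>'_def
    by (simp add: integrable_pmf_policy sum.distrib add.assoc)
qed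

lemma sum_shift_le:
  fixes Y :: "nat \<Rightarrow> real"
  assumes "finite B" "\<And>b. b \<in> B \<Longrightarrow> 0 \<le> Y b" "\<And>a. a \<in> I \<Longrightarrow> a + k \<in> B"
  shows "(\<Sum>a\<in>I. Y (a + k)) \<le> (\<Sum>b\<in>B. Y b)"
proof -
  have "(\<Sum>a\<in>I. Y (a + k)) = (\<Sum>b\<in>(\<lambda>a. a + k) ` I. Y b)"
    by (simp add: sum.reindex inj_on_def)
  also have "\<dots> \<le> (\<Sum>b\<in>B. Y b)" using assms by (intro sum_mono2) auto
  finally show ?thesis .
qed

definition rank_pulls :: "nat \<Rightarrow> nat \<Rightarrow> (hist \<Rightarrow> nat pmf) \<Rightarrow> nat \<Rightarrow> (nat \<Rightarrow> nat) \<Rightarrow> nat \<Rightarrow> real" where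
  "rank_pulls M N pol k \<sigma> a = expected_pulls M N pol \<sigma> (inv \<sigma> a) + expected_pulls M N pol \<sigma> (inv \<sigma> (a + k))"

lemma accuracy_rank_transpose_le:
  fixes M k a :: nat and \<sigma> :: "nat \<Rightarrow> nat" and t :: real
  defines "m \<equiv> real M - 1" and "\<sigma>' \<equiv> Transposition.transpose a (a + k) \<circ> \<sigma>"
  assumes \<sigma>: "\<sigma> permutes {1..M}"
    and a: "1 \<le> a" "a + k \<le> M" "1/8 \<le> (real a - 1) / m" "(real (a + k) - 1) / m \<le> 7/8"
    and \<epsilon>: "0 \<le> \<epsilon>" "2 * \<epsilon> < real k / m" and t: "0 < t"
  shows "accuracy M N pol out \<epsilon> (inv \<sigma> a) \<sigma> + accuracy M N pol out \<epsilon> (inv \<sigma>' (a + k)) \<sigma>'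
    \<le> 1 + t + (real k / m)\<^sup>2 / t * (rank_pulls M N pol k \<sigma> a + rank_pulls M N pol k \<sigma>' a)"
proof -
  define u where "u = inv \<sigma> a"
  define v where "v = inv \<sigma> (a + k)"
  have uv: "u \<in> {1..M}" "v \<in> {1..M}" "\<sigma> u = a" "\<sigma> v = a + k"
    using a permutes_inverses(1)[OF \<sigma>] permutes_in_image[OF permutes_inv[OF \<sigma>]]
    unfolding u_def v_def by auto
  have \<sigma>'_eq: "\<sigma>' = Transposition.transpose (\<sigma> u) (\<sigma> v) \<circ> \<sigma>" unfolding \<sigma>'_def uv ..
  have "0 < real k / m" using \<epsilon> by linarith
  then have "0 < k" by (simp add: zero_less_divide_iff)
  then have inv_\<sigma>': "inv \<sigma>' (a + k) = u" "inv \<sigma>' a = v"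
    unfolding permutes_inv_eq[OF permutes_transpose_compose[OF \<sigma> uv(1,2), folded \<sigma>'_eq]]
    using uv by (auto simp: \<sigma>'_def)
  have \<tau>: "tau_unif M \<sigma> u = (real a - 1) / m" "tau_unif M \<sigma> v = (real (a + k) - 1) / m"
    using uv unfolding m_def by (simp_all add: tau_unif_eq)
  have "tau_unif M \<sigma> v - tau_unif M \<sigma> u = real k / m"
    unfolding \<tau> by (simp add: diff_divide_distrib[symmetric])
  then have "accuracy M N pol out \<epsilon> u \<sigma> + accuracy M N pol out \<epsilon> u \<sigma>' \<le> 1 + t + (real k / m)\<^sup>2 / t *
      (expected_pulls M N pol \<sigma> u + expected_pulls M N pol \<sigma> v + expected_pulls M N pol \<sigma>' u + expected_pulls M N pol \<sigma>' v)"
    using accuracy_transpose_le[OF \<sigma> uv(1,2) _ _ \<epsilon>(1) _ t, of N pol out] a \<epsilon>(2)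
    unfolding \<sigma>'_eq \<tau> by simp
  then show ?thesis unfolding rank_pulls_def inv_\<sigma>' u_def v_def by (simp add: algebra_simps)
qed

lemma sum_rank_pulls_le:
  assumes \<sigma>: "\<sigma> permutes {1..M}" and I: "\<And>a. a \<in> I \<Longrightarrow> a \<in> {1..M} \<and> a + k \<in> {1..M}"
  shows "(\<Sum>a\<in>I. rank_pulls M N pol k \<sigma> a) \<le> 2 * real N"
proof -
  have "(\<Sum>b\<in>{1..M}. expected_pulls M N pol \<sigma> (inv \<sigma> b)) = (\<Sum>w\<in>{1..M}. expected_pulls M N pol \<sigma> w)"
    by (rule sum.reindex_bij_betw[OF permutes_imp_bij[OF permutes_inv[OF \<sigma>]]])
  also have "\<dots> \<le> real N" by (rule sum_expected_pulls_le) simp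
  finally have total: "(\<Sum>b\<in>{1..M}. expected_pulls M N pol \<sigma> (inv \<sigma> b)) \<le> real N" .
  have "(\<Sum>a\<in>I. expected_pulls M N pol \<sigma> (inv \<sigma> (a + j))) \<le> real N" if "j \<in> {0, k}" for j
    using sum_shift_le[of "{1..M}" "\<lambda>b. expected_pulls M N pol \<sigma> (inv \<sigma> b)" I j] I that total
    by (auto simp: expected_pulls_nonneg)
  from this[of 0] this[of k] show ?thesis unfolding rank_pulls_def by (simp add: sum.distrib)
qed

lemma sum_accuracy_pairs_le:
  fixes M k :: nat and t :: real
  defines "m \<equiv> real M - 1"
  assumes I: "\<And>a. a \<in> I \<Longrightarrow> 1 \<le> a \<and> a + k \<le> M \<and> 1/8 \<le> (real a - 1) / m \<and> (real (a + k) - 1) / m \<le> 7/8"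
    and \<epsilon>: "0 \<le> \<epsilon>" "2 * \<epsilon> < real k / m" and t: "0 < t"
  shows "(\<Sum>\<sigma>\<in>unit_perms M. \<Sum>a\<in>I. accuracy M N pol out \<epsilon> (inv \<sigma> a) \<sigma> + accuracy M N pol out \<epsilon> (inv \<sigma> (a + k)) \<sigma>)
     \<le> fact M * (real (card I) * (1 + t) + 4 * (real k / m)\<^sup>2 / t * real N)"
proof -
  define acc where "acc u \<sigma> = accuracy M N pol out \<epsilon> u \<sigma>" for u \<sigma>
  define P where "P = rank_pulls M N pol k"
  define tr where "tr a = Transposition.transpose a (a + k)" for a
  define c where "c = (real k / m)\<^sup>2 / t"
  have per_rank: "(\<Sum>\<sigma>\<in>unit_perms M. acc (inv \<sigma> a) \<sigma> + acc (inv \<sigma> (a + k)) \<sigma>)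
      \<le> fact M * (1 + t) + 2 * c * (\<Sum>\<sigma>\<in>unit_perms M. P \<sigma> a)" if a: "a \<in> I" for a
  proof -
    have tr: "tr a permutes {1..M}" unfolding tr_def using I[OF a] by (intro permutes_swap_id) auto
    have "(\<Sum>\<sigma>\<in>unit_perms M. acc (inv \<sigma> a) \<sigma> + acc (inv \<sigma> (a + k)) \<sigma>)
        = (\<Sum>\<sigma>\<in>unit_perms M. acc (inv \<sigma> a) \<sigma> + acc (inv (tr a \<circ> \<sigma>) (a + k)) (tr a \<circ> \<sigma>))"
      using setum_permutations_compose_left[OF tr, of "\<lambda>\<sigma>. acc (inv \<sigma> (a + k)) \<sigma>"] by (simp add: sum.distrib)
    also have "\<dots> \<le> (\<Sum>\<sigma>\<in>unit_perms M. 1 + t + c * (P \<sigma> a + P (tr a \<circ> \<sigma>) a))"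
      using accuracy_rank_transpose_le[OF _ _ _ _ _ \<epsilon>[unfolded m_def] t] I[OF a]
      unfolding acc_def P_def c_def tr_def m_def by (intro sum_mono) auto
    also have "\<dots> = (\<Sum>\<sigma>\<in>unit_perms M. 1 + t) +
        c * ((\<Sum>\<sigma>\<in>unit_perms M. P \<sigma> a) + (\<Sum>\<sigma>\<in>unit_perms M. P (tr a \<circ> \<sigma>) a))"
      by (simp add: sum.distrib sum_distrib_left[symmetric])
    also have "\<dots> = fact M * (1 + t) + 2 * c * (\<Sum>\<sigma>\<in>unit_perms M. P \<sigma> a)"
      unfolding sum_constant card_unit_perms setum_permutations_compose_left[OF tr, of "\<lambda>\<sigma>. P \<sigma> a", symmetric]
      by simp
    finally show ?thesis .
  qed
  have pulls: "(\<Sum>a\<in>I. P \<sigma> a) \<le> 2 * real N" if "\<sigma> permutes {1..M}" for \<sigma>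
    unfolding P_def by (rule sum_rank_pulls_le[OF that]) (drule I, auto)
  have "(\<Sum>\<sigma>\<in>unit_perms M. \<Sum>a\<in>I. acc (inv \<sigma> a) \<sigma> + acc (inv \<sigma> (a + k)) \<sigma>)
      = (\<Sum>a\<in>I. \<Sum>\<sigma>\<in>unit_perms M. acc (inv \<sigma> a) \<sigma> + acc (inv \<sigma> (a + k)) \<sigma>)"
    by (rule sum.swap)
  also have "\<dots> \<le> (\<Sum>a\<in>I. fact M * (1 + t) + 2 * c * (\<Sum>\<sigma>\<in>unit_perms M. P \<sigma> a))"
    by (rule sum_mono) (rule per_rank)
  also have "\<dots> = real (card I) * fact M * (1 + t) + 2 * c * (\<Sum>\<sigma>\<in>unit_perms M. \<Sum>a\<in>I. P \<sigma> a)"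
    by (simp add: sum.distrib sum_distrib_left sum.swap[of _ I])
  also have "\<dots> \<le> real (card I) * fact M * (1 + t) + 2 * c * (\<Sum>\<sigma>\<in>unit_perms M. 2 * real N)"
    using pulls t unfolding c_def by (intro add_left_mono mult_left_mono sum_mono) auto
  also have "\<dots> = fact M * (real (card I) * (1 + t) + 4 * (real k / m)\<^sup>2 / t * real N)"
    unfolding sum_constant card_unit_perms c_def by (simp add: algebra_simps)
  finally show ?thesis unfolding acc_def .
qed

lemma sum_shift_pairs_ge:
  fixes X :: "nat \<Rightarrow> real" and M lo hi k :: nat
  assumes X: "\<And>b. 0 \<le> X b" "\<And>b. X b \<le> 1" and "1 \<le> lo" "hi \<le> M"
  shows "2 * ((\<Sum>b\<in>{1..M}. X b) - (real M - real (card {lo + k..hi - k}))) \<le> (\<Sum>a\<in>{lo..hi - k}. X a + X (a + k))"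
proof -
  define Mid where "Mid = {lo + k..hi - k}"
  have Mid: "Mid \<subseteq> {1..M}" "finite Mid" unfolding Mid_def using assms by auto
  have "(\<Sum>b\<in>{1..M}. X b) = (\<Sum>b\<in>Mid. X b) + (\<Sum>b\<in>{1..M} - Mid. X b)"
    using sum.subset_diff[OF Mid(1), of X] by simp
  also have "(\<Sum>b\<in>{1..M} - Mid. X b) \<le> real M - real (card Mid)"
    using sum_bounded_above[of "{1..M} - Mid" X 1] X(2) card_Diff_subset[OF Mid(2,1)] card_mono[OF _ Mid(1)]
    by (simp add: of_nat_diff)
  finally have total: "(\<Sum>b\<in>{1..M}. X b) \<le> (\<Sum>b\<in>Mid. X b) + (real M - real (card Mid))" by simp
  have "(\<Sum>b\<in>Mid. X b) \<le> (\<Sum>a\<in>{lo..hi - k}. X a)"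
    using X(1) unfolding Mid_def by (intro sum_mono2) auto
  moreover have "(\<Sum>b\<in>Mid. X b) \<le> (\<Sum>a\<in>{lo..hi - k}. X (a + k))"
  proof -
    have "Mid \<subseteq> (\<lambda>a. a + k) ` {lo..hi - k}"
      unfolding Mid_def by (auto intro!: image_eqI[where x="_ - k"])
    then have "(\<Sum>b\<in>Mid. X b) \<le> (\<Sum>b\<in>(\<lambda>a. a + k) ` {lo..hi - k}. X b)"
      using X(1) by (intro sum_mono2) auto
    also have "\<dots> = (\<Sum>a\<in>{lo..hi - k}. X (a + k))"
      by (rule sum.reindex[unfolded comp_def]) (simp add: inj_on_def)
    finally show ?thesis .
  qed
  ultimately show ?thesis using total unfolding Mid_def by (simp add: sum.distrib)
qed

lemma swap_window:
  fixes M :: nat and \<epsilon> :: real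
  defines "m \<equiv> real M - 1"
  assumes M: "0 < M" and M\<epsilon>: "1 / real M \<le> \<epsilon>" and \<epsilon>: "\<epsilon> \<le> 1/200"
  obtains lo hi k :: nat where "1 \<le> lo" "hi \<le> M" "lo + 2 * k \<le> hi"
    "1/8 \<le> (real lo - 1) / m" "(real hi - 1) / m \<le> 7/8" "2 * \<epsilon> < real k / m" "real k / m \<le> 4 * \<epsilon>"
    "real M / 10 \<le> 2 * real (card {lo + k..hi - k}) - 11/10 * real (card {lo..hi - k}) - real M / 2"
proof -
  have "1 \<le> \<epsilon> * real M" using M M\<epsilon> by (simp add: divide_simps)
  moreover have "\<epsilon> * real M \<le> 1/200 * real M" using \<epsilon> by (intro mult_right_mono) auto
  ultimately have "200 \<le> real M" "0 < \<epsilon> * real M" by linarith+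
  then have "0 < \<epsilon>" "200 \<le> real M" by (simp_all add: zero_less_mult_iff)
  then have m: "199 \<le> m" "2 * \<epsilon> * m \<le> m / 100"
    using mult_right_mono[OF \<epsilon>, of m] unfolding m_def by auto
  define k where "k = nat \<lfloor>2 * \<epsilon> * m\<rfloor> + 1"
  define lo where "lo = nat \<lceil>m / 8\<rceil> + 1"
  define hi where "hi = nat \<lfloor>7 * m / 8\<rfloor> + 1"
  have "real k = real_of_int \<lfloor>2 * \<epsilon> * m\<rfloor> + 1" "real lo = real_of_int \<lceil>m / 8\<rceil> + 1"
    "real hi = real_of_int \<lfloor>7 * m / 8\<rfloor> + 1"
    using \<open>0 < \<epsilon>\<close> m unfolding k_def lo_def hi_def by simp_all
  then have k: "2 * \<epsilon> * m < real k" "real k \<le> 2 * \<epsilon> * m + 1"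
    and lo: "m / 8 + 1 \<le> real lo" "real lo \<le> m / 8 + 2"
    and hi: "7 * m / 8 \<le> real hi" "real hi \<le> 7 * m / 8 + 1" by linarith+
  have window: "lo + 2 * k \<le> hi" using lo k hi m by linarith
  show thesis
  proof
    show "1 \<le> lo" unfolding lo_def by simp
    have "real M = m + 1" unfolding m_def by simp
    then have "real hi \<le> real M" using hi m by linarith
    then show "hi \<le> M" by simp
    show "lo + 2 * k \<le> hi" by (fact window)
    show "1/8 \<le> (real lo - 1) / m" "(real hi - 1) / m \<le> 7/8" "2 * \<epsilon> < real k / m"
      using lo hi k m by (simp_all add: divide_simps mult.commute)
    have "1 / m \<le> 2 / real M" using m unfolding m_def by (simp add: divide_simps)
    also have "\<dots> \<le> 2 * \<epsilon>" using M\<epsilon> by simp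
    finally show "real k / m \<le> 4 * \<epsilon>" using k m by (simp add: divide_simps)
    have "real (card {lo + k..hi - k}) = real hi - real lo - 2 * real k + 1"
      "real (card {lo..hi - k}) = real hi - real lo - real k + 1"
      using window by (simp_all add: of_nat_diff)
    then show "real M / 10 \<le> 2 * real (card {lo + k..hi - k}) - 11/10 * real (card {lo..hi - k}) - real M / 2"
      using lo hi k m \<open>real M = m + 1\<close> by linarith
  qed
qed

lemma sum_rank_accuracy_ge:
  assumes \<delta>: "\<delta> \<le> 1/4"
    and accurate: "\<forall>u\<in>{1..M}. measure_pmf.prob (cate_experiment M N pol out) (accurate_at M u \<epsilon>) \<ge> 1 - \<delta>"
  shows "real M * (3/4 * fact M) \<le> (\<Sum>\<sigma>\<in>unit_perms M. \<Sum>b\<in>{1..M}. accuracy M N pol out \<epsilon> (inv \<sigma> b) \<sigma>)"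
proof -
  define acc where "acc u \<sigma> = accuracy M N pol out \<epsilon> u \<sigma>" for u \<sigma>
  have "3/4 * fact M \<le> (\<Sum>\<sigma>\<in>unit_perms M. acc u \<sigma>)" if "u \<in> {1..M}" for u
  proof -
    have "3/4 * fact M \<le> (1 - \<delta>) * (fact M :: real)" using \<delta> by (intro mult_right_mono) auto
    also have "\<dots> \<le> (\<Sum>\<sigma>\<in>unit_perms M. acc u \<sigma>)"
      using accurate that unfolding prob_accurate_at acc_def by (simp add: divide_simps)
    finally show ?thesis .
  qed
  then have "(\<Sum>u\<in>{1..M}. 3/4 * fact M) \<le> (\<Sum>\<sigma>\<in>unit_perms M. \<Sum>u\<in>{1..M}. acc u \<sigma>)"
    by (subst sum.swap) (rule sum_mono)
  also have "\<dots> = (\<Sum>\<sigma>\<in>unit_perms M. \<Sum>b\<in>{1..M}. acc (inv \<sigma> b) \<sigma>)"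
  proof (rule sum.cong[OF refl])
    fix \<sigma> assume "\<sigma> \<in> unit_perms M"
    then show "(\<Sum>u\<in>{1..M}. acc u \<sigma>) = (\<Sum>b\<in>{1..M}. acc (inv \<sigma> b) \<sigma>)"
      using sum.reindex_bij_betw[OF permutes_imp_bij[OF permutes_inv], of \<sigma> "{1..M}" "\<lambda>u. acc u \<sigma>"] by simp
  qed
  finally show ?thesis unfolding acc_def by simp
qed

lemma lower_bound:
  assumes M: "2 \<le> M" and M\<epsilon>: "1 / real M \<le> \<epsilon>" and \<epsilon>: "\<epsilon> \<le> 1/200" and \<delta>: "\<delta> \<le> 1/4"
    and accurate: "\<forall>u\<in>{1..M}. measure_pmf.prob (cate_experiment M N pol out) (accurate_at M u \<epsilon>) \<ge> 1 - \<delta>"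
  shows "1 / 6400 * real M / \<epsilon>\<^sup>2 \<le> real N"
proof -
  define m where "m = real M - 1"
  define acc where "acc u \<sigma> = accuracy M N pol out \<epsilon> u \<sigma>" for u \<sigma>
  obtain lo hi k where window: "1 \<le> lo" "hi \<le> M" "lo + 2 * k \<le> hi"
    "1/8 \<le> (real lo - 1) / m" "(real hi - 1) / m \<le> 7/8" "2 * \<epsilon> < real k / m" "real k / m \<le> 4 * \<epsilon>"
    "real M / 10 \<le> 2 * real (card {lo + k..hi - k}) - 11/10 * real (card {lo..hi - k}) - real M / 2"
    using swap_window[OF _ M\<epsilon> \<epsilon>, folded m_def] M by auto
  define I where "I = {lo..hi - k}"
  define Mid where "Mid = {lo + k..hi - k}"
  have m: "0 < m" using M unfolding m_def by simp
  have "0 < 1 / real M" using M by simp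
  then have "0 < \<epsilon>" using M\<epsilon> by linarith
  have "real M * (3/4 * fact M) \<le> (\<Sum>\<sigma>\<in>unit_perms M. \<Sum>b\<in>{1..M}. acc (inv \<sigma> b) \<sigma>)"
    unfolding acc_def by (rule sum_rank_accuracy_ge[OF \<delta> accurate])
  moreover have "(\<Sum>\<sigma>\<in>unit_perms M. 2 * ((\<Sum>b\<in>{1..M}. acc (inv \<sigma> b) \<sigma>) - (real M - real (card Mid))))
      = 2 * (\<Sum>\<sigma>\<in>unit_perms M. \<Sum>b\<in>{1..M}. acc (inv \<sigma> b) \<sigma>) - 2 * fact M * (real M - real (card Mid))"
    unfolding sum_distrib_left[symmetric] sum_subtractf sum_constant card_unit_perms by (simp add: algebra_simps)
  ultimately have "2 * (3/4 * real M - (real M - real (card Mid))) * fact M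
      \<le> (\<Sum>\<sigma>\<in>unit_perms M. 2 * ((\<Sum>b\<in>{1..M}. acc (inv \<sigma> b) \<sigma>) - (real M - real (card Mid))))"
    by (simp add: algebra_simps)
  also have "\<dots> \<le> (\<Sum>\<sigma>\<in>unit_perms M. \<Sum>a\<in>I. acc (inv \<sigma> a) \<sigma> + acc (inv \<sigma> (a + k)) \<sigma>)"
    unfolding I_def Mid_def acc_def
    by (intro sum_mono sum_shift_pairs_ge accuracy_nonneg accuracy_le_1 window(1,2))
  also have "\<dots> \<le> fact M * (real (card I) * (1 + 1/10) + 4 * (real k / m)\<^sup>2 / (1/10) * real N)"
    unfolding acc_def m_def
  proof (rule sum_accuracy_pairs_le[OF _ _ window(6)[unfolded m_def]])
    fix a assume "a \<in> I"
    then have "real lo \<le> real a" "real (a + k) \<le> real hi" "a + k \<le> M" unfolding I_def using window(2,3) by auto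
    then show "1 \<le> a \<and> a + k \<le> M \<and> 1/8 \<le> (real a - 1) / (real M - 1) \<and> (real (a + k) - 1) / (real M - 1) \<le> 7/8"
      using window(1,4,5) m unfolding m_def by (auto simp: divide_simps)
  qed (use \<open>0 < \<epsilon>\<close> in simp_all)
  finally have "2 * (3/4 * real M - (real M - real (card Mid))) \<le> real (card I) * (11/10) + 40 * (real k / m)\<^sup>2 * real N"
    by (simp add: mult.commute)
  then have "real M / 10 \<le> 40 * (real k / m)\<^sup>2 * real N"
    using window(8) unfolding I_def Mid_def by argo
  also have "\<dots> \<le> 40 * (4 * \<epsilon>)\<^sup>2 * real N"
    using window(7) m by (intro mult_right_mono mult_left_mono power_mono) auto
  finally show ?thesis using \<open>0 < \<epsilon>\<close> by (simp add: divide_simps power2_eq_square mult_ac)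
qed

theorem theorem2:
  shows "(\<exists>C>0. \<forall>M K \<epsilon> \<delta>. 2 \<le> M \<longrightarrow> 1 \<le> K \<longrightarrow> K \<le> M \<longrightarrow>
            0 < \<epsilon> \<longrightarrow> \<epsilon> < 1 \<longrightarrow> 0 < \<delta> \<longrightarrow> \<delta> < 1 \<longrightarrow>
            (\<exists>N pol (out :: hist \<Rightarrow> nat set pmf).
               real N \<le> C * real M * ln (2 * real M / \<delta>) / \<epsilon> \<and>
               measure_pmf.prob (cate_experiment M N pol out) (good_alloc M K \<epsilon>) \<ge> 1 - \<delta>))
       \<and>
         (\<exists>c>0. \<exists>\<epsilon>0>0. \<forall>M \<epsilon> \<delta> N pol (out :: hist \<Rightarrow> (nat \<Rightarrow> real) pmf).
            2 \<le> M \<longrightarrow> 1 / real M \<le> \<epsilon> \<longrightarrow> \<epsilon> \<le> \<epsilon>0 \<longrightarrow> 0 < \<delta> \<longrightarrow> \<delta> \<le> 1/4 \<longrightarrow>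
            (\<forall>u\<in>{1..M}. measure_pmf.prob (cate_experiment M N pol out) (accurate_at M u \<epsilon>) \<ge> 1 - \<delta>)
            \<longrightarrow> real N \<ge> c * real M / \<epsilon>^2)"
proof
  show "\<exists>C>0. \<forall>M K \<epsilon> \<delta>. 2 \<le> M \<longrightarrow> 1 \<le> K \<longrightarrow> K \<le> M \<longrightarrow>
            0 < \<epsilon> \<longrightarrow> \<epsilon> < 1 \<longrightarrow> 0 < \<delta> \<longrightarrow> \<delta> < 1 \<longrightarrow>
            (\<exists>N pol (out :: hist \<Rightarrow> nat set pmf).
               real N \<le> C * real M * ln (2 * real M / \<delta>) / \<epsilon> \<and>
               measure_pmf.prob (cate_experiment M N pol out) (good_alloc M K \<epsilon>) \<ge> 1 - \<delta>)"
    by (rule exI[of _ "65::real"]) (intro conjI allI impI upper_bound; simp)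
  show "\<exists>c>0. \<exists>\<epsilon>0>0. \<forall>M \<epsilon> \<delta> N pol (out :: hist \<Rightarrow> (nat \<Rightarrow> real) pmf).
            2 \<le> M \<longrightarrow> 1 / real M \<le> \<epsilon> \<longrightarrow> \<epsilon> \<le> \<epsilon>0 \<longrightarrow> 0 < \<delta> \<longrightarrow> \<delta> \<le> 1/4 \<longrightarrow>
            (\<forall>u\<in>{1..M}. measure_pmf.prob (cate_experiment M N pol out) (accurate_at M u \<epsilon>) \<ge> 1 - \<delta>)
            \<longrightarrow> real N \<ge> c * real M / \<epsilon>^2"
    by (rule exI[of _ "1/6400::real"]) (intro conjI exI[of _ "1/200::real"] allI impI lower_bound; simp)
qed

end
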